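(* Let $(\mathbf W^B,\mathbf W^E)=(\{W^{B,n}\},\{W^{E,n}\})$ be a general sequence of wire-tap channels, $W^{B,n}$ from $\mathcal X^n$ to $\mathcal Y^n$ and $W^{E,n}$ from $\mathcal X^n$ to $\mathcal Z^n$. For every sequence $\mathbf p=\{p^n\}$ of input distributions, $$C_d(\mathbf W^B,\mathbf W^E)\ge\underline I(1|\mathbf p,\mathbf W^B)-\overline I(0|\mathbf p,\mathbf W^E).$$ If furthermore $|\mathcal Z^n|=d^n$ for a fixed positive integer $d$, then $$C_I(\mathbf W^B,\mathbf W^E)\ge\underline I(1|\mathbf p,\mathbf W^B)-\overline I(0|\mathbf p,\mathbf W^E).$$
   Context: Channels are maps $x\mapsto W_x$ into probability distributions on a finite or countable output set; $W_p(y)=\sum_xp(x)W_x(y)$. A wire-tap code $\Phi=(M,\{Q_i\}_{i=1}^M,\{\mathcal D_i\}_{i=1}^M)$ for a pair $(W^B,W^E)$ consists of input distributions $Q_i$ and pairwise disjoint subsets $\mathcal D_i$ of the main receiver's output set; $|\Phi|=M$, $\epsilon_B(\Phi)=\frac1M\sum_iW^B_{Q_i}(\mathcal D_i^c)$, $I_E(\Phi)=\sum_i\frac1MD(W^E_{Q_i}\|W^E_\Phi)$ with $W^E_\Phi=\frac1M\sum_iW^E_{Q_i}$, and $d_E(\Phi)=\frac1{M(M-1)}\sum_{i\ne j}\sum_z|W^E_{Q_i}(z)-W^E_{Q_j}(z)|$. Capacities: $C_d(\mathbf W^B,\mathbf W^E):=\sup\{\liminf_n\frac1n\log|\Phi_n|\}$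 over sequences of wire-tap codes $\Phi_n$ for $(W^{B,n},W^{E,n})$ with $\epsilon_B(\Phi_n)\to0$ and $d_E(\Phi_n)\to0$; $C_I$ is the same with $d_E(\Phi_n)\to0$ replaced by $I_E(\Phi_n)/n\to0$. For a sequence of channels $\mathbf W=\{W^n\}$ and $\mathbf p=\{p^n\}$: $\overline I(\epsilon|\mathbf p,\mathbf W):=\inf\{a:\limsup_n\mathrm{E}_{p^n}W^n_x\{y:\frac1n\log\frac{W^n_x(y)}{W^n_{p^n}(y)}>a\}\le\epsilon\}$, $\underline I(\epsilon|\mathbf p,\mathbf W):=\inf\{a:\liminf_n\mathrm{E}_{p^n}W^n_x\{y:\frac1n\log\frac{W^n_x(y)}{W^n_{p^n}(y)}>a\}\le\epsilon\}$, where for $\epsilon=1$ "$\le\epsilon$" is replaced by "$<1$". *)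

theory Defs
  imports "HOL-Probability.Probability"
begin

text \<open>Logarithms are natural (ln),
  used consistently for rates and information densities.\<close>

definition out_dist :: "('x \<Rightarrow> 'y pmf) \<Rightarrow> 'x pmf \<Rightarrow> 'y pmf" where
  "out_dist W p = bind_pmf p W"

record ('x, 'y) wtcode =
  cM :: nat
  cQ :: "nat \<Rightarrow> 'x pmf"
  cD :: "nat \<Rightarrow> 'y set"

definition valid_code :: "('x, 'y) wtcode \<Rightarrow> bool" where
  "valid_code \<Phi> \<longleftrightarrow> cM \<Phi> \<ge> 1 \<and>
     (\<forall>i<cM \<Phi>. \<forall>j<cM \<Phi>. i \<noteq> j \<longrightarrow> cD \<Phi> i \<inter> cD \<Phi> j = {})"

definition eps_B :: "('x \<Rightarrow> 'y pmf) \<Rightarrow> ('x, 'y) wtcode \<Rightarrow> real" where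
  "eps_B W \<Phi> = (1 / real (cM \<Phi>)) *
     (\<Sum>i<cM \<Phi>. measure_pmf.prob (out_dist W (cQ \<Phi> i)) (- cD \<Phi> i))"

definition eve_mix :: "('x \<Rightarrow> 'z pmf) \<Rightarrow> ('x, 'y) wtcode \<Rightarrow> 'z \<Rightarrow> real" where
  "eve_mix W \<Phi> z = (1 / real (cM \<Phi>)) * (\<Sum>i<cM \<Phi>. pmf (out_dist W (cQ \<Phi> i)) z)"

definition kl_div :: "'a pmf \<Rightarrow> ('a \<Rightarrow> real) \<Rightarrow> real" where
  "kl_div P R = (\<Sum>\<^sub>\<infinity>z. pmf P z * ln (pmf P z / R z))"

definition I_E :: "('x \<Rightarrow> 'z pmf) \<Rightarrow> ('x, 'y) wtcode \<Rightarrow> real" where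
  "I_E W \<Phi> = (\<Sum>i<cM \<Phi>. (1 / real (cM \<Phi>)) * kl_div (out_dist W (cQ \<Phi> i)) (eve_mix W \<Phi>))"

definition d_E :: "('x \<Rightarrow> 'z pmf) \<Rightarrow> ('x, 'y) wtcode \<Rightarrow> real" where
  "d_E W \<Phi> = (1 / (real (cM \<Phi>) * (real (cM \<Phi>) - 1))) *
     (\<Sum>i<cM \<Phi>. \<Sum>j\<in>{..<cM \<Phi>} - {i}.
        (\<Sum>\<^sub>\<infinity>z. \<bar>pmf (out_dist W (cQ \<Phi> i)) z - pmf (out_dist W (cQ \<Phi> j)) z\<bar>))"

definition C_d :: "(nat \<Rightarrow> 'x \<Rightarrow> 'y pmf) \<Rightarrow> (nat \<Rightarrow> 'x \<Rightarrow> 'z pmf) \<Rightarrow> ereal" where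
  "C_d WB WE = Sup {liminf (\<lambda>n. ereal (ln (real (cM (\<Phi> n))) / real n)) | \<Phi>.
      (\<forall>n. valid_code (\<Phi> n)) \<and>
      (\<lambda>n. eps_B (WB n) (\<Phi> n)) \<longlonglongrightarrow> 0 \<and>
      (\<lambda>n. d_E (WE n) (\<Phi> n)) \<longlonglongrightarrow> 0}"

definition C_I :: "(nat \<Rightarrow> 'x \<Rightarrow> 'y pmf) \<Rightarrow> (nat \<Rightarrow> 'x \<Rightarrow> 'z pmf) \<Rightarrow> ereal" where
  "C_I WB WE = Sup {liminf (\<lambda>n. ereal (ln (real (cM (\<Phi> n))) / real n)) | \<Phi>.
      (\<forall>n. valid_code (\<Phi> n)) \<and>
      (\<lambda>n. eps_B (WB n) (\<Phi> n)) \<longlonglongrightarrow> 0 \<and>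
      (\<lambda>n. I_E (WE n) (\<Phi> n) / real n) \<longlonglongrightarrow> 0}"

definition spec_F :: "(nat \<Rightarrow> 'x \<Rightarrow> 'y pmf) \<Rightarrow> (nat \<Rightarrow> 'x pmf) \<Rightarrow> nat \<Rightarrow> real \<Rightarrow> real" where
  "spec_F W p n a = measure_pmf.prob
      (bind_pmf (p n) (\<lambda>x. map_pmf (\<lambda>y. (x, y)) (W n x)))
      {(x, y). ln (pmf (W n x) y / pmf (out_dist (W n) (p n)) y) / real n > a}"

definition I_sup :: "real \<Rightarrow> (nat \<Rightarrow> 'x pmf) \<Rightarrow> (nat \<Rightarrow> 'x \<Rightarrow> 'y pmf) \<Rightarrow> ereal" where
  "I_sup \<epsilon> p W = Inf {ereal a | a.
     (if \<epsilon> = 1 then limsup (\<lambda>n. ereal (spec_F W p n a)) < 1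
      else limsup (\<lambda>n. ereal (spec_F W p n a)) \<le> ereal \<epsilon>)}"

definition I_inf :: "real \<Rightarrow> (nat \<Rightarrow> 'x pmf) \<Rightarrow> (nat \<Rightarrow> 'x \<Rightarrow> 'y pmf) \<Rightarrow> ereal" where
  "I_inf \<epsilon> p W = Inf {ereal a | a.
     (if \<epsilon> = 1 then liminf (\<lambda>n. ereal (spec_F W p n a)) < 1
      else liminf (\<lambda>n. ereal (spec_F W p n a)) \<le> ereal \<epsilon>)}"

end

theory Submission
  imports Defs "HOL-Real_Asymp.Real_Asymp"
begin

text \<open>Random coding with binning. Draw M L codewords i.i.d. from p n and split them into M bins
  of size L; message i is sent as a uniformly chosen codeword of bin i, and Bob decodes the unique
  codeword whose information density with his output exceeds a. A union bound makes Bob's average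
  error at most 1 - spec_F WB p n a + M L exp (-n a). For Eve, the likelihood ratio of a codeword
  against the output of p n is truncated at exp (n b); a second-moment estimate over the random
  codebook shows that the output of each bin is on average within
  exp (n b) / (2 r L) + r / 2 + 2 spec_F WE p n b of the output of p n in total variation, so all
  bins look alike to Eve. With M \<approx> exp (n R), L \<approx> exp (n (b + g)) and R + b + 2 g \<le> a all these
  terms vanish, and some codebook is at least as good as the average. Finally, the leakage of any
  M-message code is at most max 1 (ln M) times its d_E, so the same codes also have I_E / n \<longrightarrow> 0.\<close>

section \<open>Expectations under discrete distributions\<close>

lemma integrable_measure_pmf_bounded:
  fixes f :: "'a \<Rightarrow> real"
  assumes "\<And>x. \<bar>f x\<bar> \<le> B"
  shows "integrable (measure_pmf M) f"
  by (rule measure_pmf.integrable_const_bound[where B=B]) (use assms in auto)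

lemma expectation_pmf_bounds:
  fixes f :: "'a \<Rightarrow> real"
  assumes "\<And>x. 0 \<le> f x" "\<And>x. f x \<le> B"
  shows "0 \<le> measure_pmf.expectation M f" "measure_pmf.expectation M f \<le> B"
proof -
  have "integrable (measure_pmf M) f"
    by (rule integrable_measure_pmf_bounded[where B=B]) (use assms in \<open>simp add: abs_le_iff\<close>)
  then show "0 \<le> measure_pmf.expectation M f" "measure_pmf.expectation M f \<le> B"
    using assms by (auto intro: integral_nonneg_AE measure_pmf.integral_le_const)
qed

lemma abs_expectation_pmf_le:
  fixes f :: "'a \<Rightarrow> real"
  assumes "\<And>x. \<bar>f x\<bar> \<le> B"
  shows "\<bar>measure_pmf.expectation M f\<bar> \<le> B"
proof -
  have "\<bar>measure_pmf.expectation M f\<bar> \<le> measure_pmf.expectation M (\<lambda>x. \<bar>f x\<bar>)"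
    by (rule integral_abs_bound)
  also have "\<dots> \<le> B"
    by (rule expectation_pmf_bounds(2)) (use assms in auto)
  finally show ?thesis .
qed

lemma expectation_bind_pmf_bounded:
  fixes g :: "'b \<Rightarrow> real"
  assumes "\<And>y. \<bar>g y\<bar> \<le> B"
  shows "measure_pmf.expectation (bind_pmf A f) g =
         measure_pmf.expectation A (\<lambda>x. measure_pmf.expectation (f x) g)"
  unfolding measure_pmf_bind
  by (rule integral_bind[where K="count_space UNIV" and B=B and B'=1])
     (use assms in \<open>auto simp: measure_pmf.emeasure_space_1 measure_pmf_in_subprob_space\<close>)

lemma prob_bind_pmf:
  "measure_pmf.prob (bind_pmf A f) S = measure_pmf.expectation A (\<lambda>x. measure_pmf.prob (f x) S)"
  using expectation_bind_pmf_bounded[of "indicator S" 1 A f] by (simp add: indicator_def)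

lemma expectation_pair_pmf_bounded:
  fixes F :: "'a \<Rightarrow> 'b \<Rightarrow> real"
  assumes "\<And>a b. \<bar>F a b\<bar> \<le> B"
  shows "measure_pmf.expectation (pair_pmf A C) (\<lambda>u. F (fst u) (snd u)) =
         measure_pmf.expectation A (\<lambda>a. measure_pmf.expectation C (F a))"
  unfolding pair_pmf_def using assms
  by (simp add: expectation_bind_pmf_bounded[where B=B])

lemma expectation_swap_pmf_bounded:
  fixes F :: "'a \<Rightarrow> 'b \<Rightarrow> real"
  assumes "\<And>a b. \<bar>F a b\<bar> \<le> B"
  shows "measure_pmf.expectation A (\<lambda>a. measure_pmf.expectation C (F a)) =
         measure_pmf.expectation C (\<lambda>b. measure_pmf.expectation A (\<lambda>a. F a b))"
proof -
  have "measure_pmf.expectation A (\<lambda>a. measure_pmf.expectation C (F a)) =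
        measure_pmf.expectation (pair_pmf A C) (\<lambda>u. F (fst u) (snd u))"
    by (rule expectation_pair_pmf_bounded[symmetric]) (rule assms)
  also have "\<dots> = measure_pmf.expectation (pair_pmf C A) (\<lambda>v. F (snd v) (fst v))"
    by (subst pair_commute_pmf) (simp add: case_prod_unfold)
  also have "\<dots> = measure_pmf.expectation C (\<lambda>b. measure_pmf.expectation A (\<lambda>a. F a b))"
    by (rule expectation_pair_pmf_bounded) (rule assms)
  finally show ?thesis .
qed

lemma expectation_pair_pmf_mult:
  fixes f :: "'a \<Rightarrow> real" and g :: "'b \<Rightarrow> real"
  assumes "\<And>a. \<bar>f a\<bar> \<le> B" "\<And>b. \<bar>g b\<bar> \<le> B"
  shows "measure_pmf.expectation (pair_pmf A C) (\<lambda>u. f (fst u) * g (snd u)) =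
         measure_pmf.expectation A f * measure_pmf.expectation C g"
proof -
  have "\<bar>f a * g b\<bar> \<le> B * B" for a b
    unfolding abs_mult by (rule mult_mono) (use assms(1)[of a] assms(2)[of b] in auto)
  then have "measure_pmf.expectation (pair_pmf A C) (\<lambda>u. f (fst u) * g (snd u)) =
             measure_pmf.expectation A (\<lambda>a. f a * measure_pmf.expectation C g)"
    by (subst expectation_pair_pmf_bounded[where B="B * B"]) auto
  then show ?thesis by simp
qed

lemma summable_infsum_pmf_times:
  fixes g :: "'a \<Rightarrow> real"
  assumes "\<And>z. \<bar>g z\<bar> \<le> B"
  shows "(\<lambda>z. pmf P z * g z) summable_on UNIV"
    and "(\<Sum>\<^sub>\<infinity>z. pmf P z * g z) = measure_pmf.expectation P g"
proof -
  have abs_sum: "Infinite_Set_Sum.abs_summable_on (\<lambda>z. pmf P z * g z) UNIV"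
  proof (rule abs_summable_on_comparison_test[where g="\<lambda>z. B * pmf P z"])
    show "Infinite_Set_Sum.abs_summable_on (\<lambda>z. B * pmf P z) UNIV"
      by (rule abs_summable_on_cmult_right) (rule pmf_abs_summable)
    fix z show "norm (pmf P z * g z) \<le> norm (B * pmf P z)"
      using assms[of z] by (auto simp: abs_mult mult.commute intro: mult_right_mono)
  qed
  then show "(\<lambda>z. pmf P z * g z) summable_on UNIV"
    using abs_summable_equivalent abs_summable_summable by blast
  show "(\<Sum>\<^sub>\<infinity>z. pmf P z * g z) = measure_pmf.expectation P g"
    by (simp add: pmf_expectation_eq_infsetsum infsetsum_infsum[OF abs_sum])
qed

lemma summable_on_pmf: "pmf P summable_on UNIV"
  and infsum_pmf: "(\<Sum>\<^sub>\<infinity>z. pmf P z) = 1"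
  using summable_infsum_pmf_times[of "\<lambda>_. 1" 1 P] by auto

lemma summable_on_sum:
  fixes f :: "'i \<Rightarrow> 'a \<Rightarrow> real"
  assumes "finite I" "\<And>i. i \<in> I \<Longrightarrow> f i summable_on A"
  shows "(\<lambda>x. \<Sum>i\<in>I. f i x) summable_on A"
    and "(\<Sum>\<^sub>\<infinity>x\<in>A. \<Sum>i\<in>I. f i x) = (\<Sum>i\<in>I. \<Sum>\<^sub>\<infinity>x\<in>A. f i x)"
  using assms by (induction I rule: finite_induct) (simp_all add: summable_on_add infsum_add)

lemma summable_on_diff:
  fixes f g :: "'a \<Rightarrow> real"
  assumes "f summable_on A" "g summable_on A"
  shows "(\<lambda>x. f x - g x) summable_on A"
  using summable_on_add[OF assms(1) summable_on_uminus[THEN iffD2, OF assms(2)]] by simp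

lemma infsum_diff:
  fixes f g :: "'a \<Rightarrow> real"
  assumes "f summable_on A" "g summable_on A"
  shows "(\<Sum>\<^sub>\<infinity>x\<in>A. f x - g x) = (\<Sum>\<^sub>\<infinity>x\<in>A. f x) - (\<Sum>\<^sub>\<infinity>x\<in>A. g x)"
  using infsum_add[OF assms(1) summable_on_uminus[THEN iffD2, OF assms(2)]] by (simp add: infsum_uminus)

lemma summable_on_abs_diff_pmf: "(\<lambda>z. \<bar>pmf A z - pmf B z\<bar>) summable_on UNIV"
proof (rule summable_on_comparison_test[OF summable_on_add[OF summable_on_pmf[of A] summable_on_pmf[of B]]])
  fix z show "\<bar>pmf A z - pmf B z\<bar> \<le> pmf A z + pmf B z"
    using pmf_nonneg[of A z] pmf_nonneg[of B z] by linarith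
qed simp

lemma infsum_abs_diff_pmf_triangle:
  "(\<Sum>\<^sub>\<infinity>z. \<bar>pmf A z - pmf B z\<bar>) \<le> (\<Sum>\<^sub>\<infinity>z. \<bar>pmf A z - pmf C z\<bar>) + (\<Sum>\<^sub>\<infinity>z. \<bar>pmf B z - pmf C z\<bar>)"
proof -
  have "(\<Sum>\<^sub>\<infinity>z. \<bar>pmf A z - pmf B z\<bar>) \<le> (\<Sum>\<^sub>\<infinity>z. \<bar>pmf A z - pmf C z\<bar> + \<bar>pmf B z - pmf C z\<bar>)"
    by (rule infsum_mono[OF summable_on_abs_diff_pmf summable_on_add[OF summable_on_abs_diff_pmf summable_on_abs_diff_pmf]])
       linarith
  also have "\<dots> = (\<Sum>\<^sub>\<infinity>z. \<bar>pmf A z - pmf C z\<bar>) + (\<Sum>\<^sub>\<infinity>z. \<bar>pmf B z - pmf C z\<bar>)"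
    by (rule infsum_add[OF summable_on_abs_diff_pmf summable_on_abs_diff_pmf])
  finally show ?thesis .
qed

lemma prob_le_by_pmf_le:
  assumes "\<And>y. y \<in> S \<Longrightarrow> pmf P y \<le> \<theta> * pmf R y" "0 \<le> \<theta>"
  shows "measure_pmf.prob P S \<le> \<theta>"
proof -
  have ind: "\<And>z. \<bar>indicator S z\<bar> \<le> (1::real)" by (simp add: indicator_def)
  have "measure_pmf.prob P S = (\<Sum>\<^sub>\<infinity>z. pmf P z * indicator S z)"
    using summable_infsum_pmf_times(2)[where g="indicator S" and B=1, OF ind] by simp
  also have "\<dots> \<le> (\<Sum>\<^sub>\<infinity>z. \<theta> * (pmf R z * indicator S z))"
    by (intro infsum_mono summable_infsum_pmf_times(1)[where g="indicator S" and B=1, OF ind] summable_on_cmult_right)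
       (use assms(1) in \<open>auto simp: indicator_def\<close>)
  also have "\<dots> = \<theta> * measure_pmf.prob R S"
    using summable_infsum_pmf_times(2)[where g="indicator S" and B=1, OF ind] by (simp add: infsum_cmult_right')
  also have "\<dots> \<le> \<theta>" using assms(2) by (simp add: mult_left_le)
  finally show ?thesis .
qed

lemma exists_in_set_pmf_le_expectation:
  fixes f :: "'a \<Rightarrow> real"
  assumes "integrable (measure_pmf M) f" "0 < \<eta>"
  shows "\<exists>x\<in>set_pmf M. f x \<le> measure_pmf.expectation M f + \<eta>"
proof (rule ccontr)
  assume "\<not> ?thesis"
  then have "AE x in measure_pmf M. measure_pmf.expectation M f + \<eta> \<le> f x"
    by (auto simp: AE_measure_pmf_iff)
  then have "measure_pmf.expectation M f + \<eta> \<le> measure_pmf.expectation M f"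
    by (rule measure_pmf.integral_ge_const[OF assms(1)])
  then show False using assms(2) by simp
qed

lemma map_pmf_Pi_pmf_component:
  assumes "finite K" "k \<in> K"
  shows "map_pmf (\<lambda>h. h k) (Pi_pmf K d (\<lambda>_. p)) = p"
  using Pi_pmf_component[OF assms(1), of k d "\<lambda>_. p"] assms by simp

lemma map_pmf_Pi_pmf_two_components:
  assumes "finite K" "k \<in> K" "k' \<in> K" "k \<noteq> k'"
  shows "map_pmf (\<lambda>h. (h k, h k')) (Pi_pmf K d (\<lambda>_. p)) = pair_pmf p p"
proof -
  have K: "K = insert k (K - {k})" using assms by auto
  have "Pi_pmf K d (\<lambda>_. p) = map_pmf (\<lambda>(y, f). f(k := y)) (pair_pmf p (Pi_pmf (K - {k}) d (\<lambda>_. p)))"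
    by (subst K, rule Pi_pmf_insert) (use assms in auto)
  then have "map_pmf (\<lambda>h. (h k, h k')) (Pi_pmf K d (\<lambda>_. p)) =
             map_pmf (\<lambda>(a, b). (id a, (\<lambda>f. f k') b)) (pair_pmf p (Pi_pmf (K - {k}) d (\<lambda>_. p)))"
    using assms(4) by (simp add: pmf.map_comp o_def case_prod_unfold)
  also have "\<dots> = pair_pmf p p"
    by (subst map_pair) (use map_pmf_Pi_pmf_component[of "K - {k}" k' d p] assms in auto)
  finally show ?thesis .
qed

lemma expectation_Pi_pmf_component:
  fixes F :: "'x \<Rightarrow> real"
  assumes "finite K" "k \<in> K"
  shows "measure_pmf.expectation (Pi_pmf K d (\<lambda>_. p)) (\<lambda>h. F (h k)) = measure_pmf.expectation p F"
  using integral_map_pmf[of "\<lambda>h. h k" "Pi_pmf K d (\<lambda>_. p)" F]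
  by (simp add: map_pmf_Pi_pmf_component[OF assms])

lemma expectation_Pi_pmf_two_components:
  fixes F :: "'x \<Rightarrow> 'x \<Rightarrow> real"
  assumes "finite K" "k \<in> K" "k' \<in> K" "k \<noteq> k'"
  shows "measure_pmf.expectation (Pi_pmf K d (\<lambda>_. p)) (\<lambda>h. F (h k) (h k')) =
         measure_pmf.expectation (pair_pmf p p) (\<lambda>u. F (fst u) (snd u))"
  using integral_map_pmf[of "\<lambda>h. (h k, h k')" "Pi_pmf K d (\<lambda>_. p)" "\<lambda>u. F (fst u) (snd u)"]
  by (simp add: map_pmf_Pi_pmf_two_components[OF assms])

section \<open>Information spectrum\<close>

text \<open>Where \<open>pmf (out_dist W q) y = 0\<close> the density takes the junk value \<open>ln 0 = 0\<close>.\<close>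
definition info_density :: "('x \<Rightarrow> 'y pmf) \<Rightarrow> 'x pmf \<Rightarrow> nat \<Rightarrow> 'x \<Rightarrow> 'y \<Rightarrow> real" where
  "info_density W q n x y = ln (pmf (W x) y / pmf (out_dist W q) y) / real n"

lemma pmf_out_dist_le_if_info_density_gt:
  assumes "0 < n" "0 \<le> a" "a < info_density W q n x y"
  shows "pmf (out_dist W q) y \<le> exp (- real n * a) * pmf (W x) y"
proof -
  let ?w = "pmf (W x) y" and ?r = "pmf (out_dist W q) y"
  have "real n * a < ln (?w / ?r)" using assms by (simp add: info_density_def field_simps)
  moreover have "0 \<le> real n * a" using assms by simp
  ultimately have "?w / ?r \<noteq> 0" by auto
  then have "0 < ?w / ?r" by (simp add: less_le)
  then have "exp (real n * a) < ?w / ?r"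
    using \<open>real n * a < ln (?w / ?r)\<close> by (metis exp_less_mono exp_ln)
  moreover have "0 < ?r" using \<open>0 < ?w / ?r\<close> pmf_nonneg[of "W x" y] by (simp add: zero_less_divide_iff)
  ultimately show ?thesis by (simp add: exp_minus field_simps)
qed

lemma pmf_le_if_info_density_le:
  assumes "0 < n" "0 < pmf (out_dist W q) y" "info_density W q n x y \<le> b"
  shows "pmf (W x) y \<le> exp (real n * b) * pmf (out_dist W q) y"
proof (cases "pmf (W x) y = 0")
  case False
  let ?w = "pmf (W x) y" and ?r = "pmf (out_dist W q) y"
  have "0 < ?w / ?r" using False assms(2) pmf_nonneg[of "W x" y] by simp
  moreover have "ln (?w / ?r) \<le> real n * b" using assms by (simp add: info_density_def field_simps)
  ultimately have "?w / ?r \<le> exp (real n * b)" by (metis exp_le_cancel_iff exp_ln)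
  then show ?thesis using assms(2) by (simp add: field_simps)
qed simp

lemma spec_F_eq_expectation:
  "spec_F W p n a = measure_pmf.expectation (p n)
     (\<lambda>x. measure_pmf.prob (W n x) {y. a < info_density (W n) (p n) n x y})"
  unfolding spec_F_def info_density_def prob_bind_pmf by (simp add: measure_map_pmf vimage_def)

lemma one_minus_spec_F:
  "1 - spec_F W p n a = measure_pmf.expectation (p n)
     (\<lambda>x. measure_pmf.prob (W n x) {y. info_density (W n) (p n) n x y \<le> a})"
proof -
  have "measure_pmf.prob (W n x) {y. info_density (W n) (p n) n x y \<le> a} =
        1 - measure_pmf.prob (W n x) {y. a < info_density (W n) (p n) n x y}" for x
    by (subst measure_pmf.prob_compl[symmetric]) (auto intro: arg_cong[where f="measure_pmf.prob _"])
  then show ?thesis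
    using integrable_measure_pmf_bounded[of "\<lambda>x. measure_pmf.prob (W n x) {y. a < info_density (W n) (p n) n x y}" 1 "p n"]
    by (simp add: spec_F_eq_expectation)
qed

lemma spec_F_nonneg: "0 \<le> spec_F W p n a"
  and spec_F_le_1: "spec_F W p n a \<le> 1"
  unfolding spec_F_def by auto

lemma spec_F_antimono: "a \<le> b \<Longrightarrow> spec_F W p n b \<le> spec_F W p n a"
  unfolding spec_F_def by (rule measure_pmf.finite_measure_mono) auto

lemma one_minus_exp_le_spec_F:
  assumes "0 < n" "b < 0"
  shows "1 - exp (real n * b) \<le> spec_F W p n b"
proof -
  have "measure_pmf.prob (W n x) {y. info_density (W n) (p n) n x y \<le> b} \<le> exp (real n * b)" for x
  proof (rule prob_le_by_pmf_le[where R="out_dist (W n) (p n)"])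
    fix y assume y: "y \<in> {y. info_density (W n) (p n) n x y \<le> b}"
    have "pmf (out_dist (W n) (p n)) y \<noteq> 0"
      using y assms by (auto simp: info_density_def)
    then show "pmf (W n x) y \<le> exp (real n * b) * pmf (out_dist (W n) (p n)) y"
      using pmf_le_if_info_density_le[OF assms(1)] y by (simp add: order_less_le)
  qed simp
  then have "1 - spec_F W p n b \<le> exp (real n * b)"
    unfolding one_minus_spec_F by (intro measure_pmf.integral_le_const integrable_measure_pmf_bounded[where B=1]) auto
  then show ?thesis by simp
qed

lemma I_sup_0_nonneg: "0 \<le> I_sup 0 p W"
  unfolding I_sup_def
proof (rule Inf_greatest, clarsimp)
  fix b assume b: "limsup (\<lambda>n. ereal (spec_F W p n b)) \<le> ereal 0"
  show "0 \<le> b"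
  proof (rule ccontr)
    assume "\<not> 0 \<le> b"
    then have "(\<lambda>n. 1 - exp (real n * b)) \<longlonglongrightarrow> 1" by real_asymp
    then have "liminf (\<lambda>n. ereal (1 - exp (real n * b))) = ereal 1"
      by (intro lim_imp_Liminf) (simp_all only: lim_ereal trivial_limit_sequentially not_False_eq_True)
    moreover have "liminf (\<lambda>n. ereal (1 - exp (real n * b))) \<le> liminf (\<lambda>n. ereal (spec_F W p n b))"
      by (intro Liminf_mono eventually_mono[OF eventually_gt_at_top[of 0]])
         (use one_minus_exp_le_spec_F[of _ b W p] \<open>\<not> 0 \<le> b\<close> in simp)
    moreover have "liminf (\<lambda>n. ereal (spec_F W p n b)) \<le> limsup (\<lambda>n. ereal (spec_F W p n b))"
      by (rule Liminf_le_Limsup) simp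
    ultimately have "ereal 1 \<le> ereal 0" using b by order
    then show False by simp
  qed
qed

lemma spec_F_tendsto_1:
  assumes "ereal a < I_inf 1 p W"
  shows "(\<lambda>n. spec_F W p n a) \<longlonglongrightarrow> 1"
proof -
  have "1 \<le> liminf (\<lambda>n. ereal (spec_F W p n a))"
  proof (rule ccontr)
    assume "\<not> 1 \<le> liminf (\<lambda>n. ereal (spec_F W p n a))"
    then have "I_inf 1 p W \<le> ereal a" unfolding I_inf_def by (intro Inf_lower) auto
    then show False using assms by simp
  qed
  moreover have "limsup (\<lambda>n. ereal (spec_F W p n a)) \<le> 1"
    by (rule Limsup_bounded) (simp add: spec_F_le_1)
  ultimately have "(\<lambda>n. ereal (spec_F W p n a)) \<longlonglongrightarrow> 1"
    using Liminf_le_Limsup[of sequentially "\<lambda>n. ereal (spec_F W p n a)"]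
    by (intro Liminf_eq_Limsup) auto
  then show ?thesis by (simp only: one_ereal_def lim_ereal)
qed

lemma spec_F_tendsto_0:
  assumes "I_sup 0 p W < ereal b"
  shows "(\<lambda>n. spec_F W p n b) \<longlonglongrightarrow> 0"
proof -
  obtain b' where b': "b' < b" "limsup (\<lambda>n. ereal (spec_F W p n b')) \<le> ereal 0"
    using assms unfolding I_sup_def by (auto simp: Inf_less_iff)
  have "limsup (\<lambda>n. ereal (spec_F W p n b)) \<le> limsup (\<lambda>n. ereal (spec_F W p n b'))"
    by (intro Limsup_mono always_eventually allI) (use spec_F_antimono[of b' b] b'(1) in auto)
  with b'(2) have "limsup (\<lambda>n. ereal (spec_F W p n b)) \<le> ereal 0" by order
  moreover have "ereal 0 \<le> liminf (\<lambda>n. ereal (spec_F W p n b))"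
    by (rule Liminf_bounded) (simp add: spec_F_nonneg)
  ultimately have "(\<lambda>n. ereal (spec_F W p n b)) \<longlonglongrightarrow> ereal 0"
    using Liminf_le_Limsup[of sequentially "\<lambda>n. ereal (spec_F W p n b)"]
    by (intro Liminf_eq_Limsup) auto
  then show ?thesis by (simp only: lim_ereal)
qed

lemma expectation_prob_info_density_gt_le:
  assumes "0 < n" "0 \<le> a"
  shows "measure_pmf.expectation (pair_pmf q q)
           (\<lambda>u. measure_pmf.prob (W (fst u)) {y. a < info_density W q n (snd u) y})
         \<le> exp (- real n * a)"
proof -
  have "measure_pmf.expectation (pair_pmf q q)
          (\<lambda>u. measure_pmf.prob (W (fst u)) {y. a < info_density W q n (snd u) y}) =
        measure_pmf.expectation q
          (\<lambda>x'. measure_pmf.expectation q (\<lambda>x. measure_pmf.prob (W x) {y. a < info_density W q n x' y}))"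
    by (subst expectation_pair_pmf_bounded[where B=1], simp)
       (rule expectation_swap_pmf_bounded[where B=1], simp)
  also have "\<dots> = measure_pmf.expectation q
                    (\<lambda>x'. measure_pmf.prob (out_dist W q) {y. a < info_density W q n x' y})"
    by (simp add: out_dist_def prob_bind_pmf)
  also have "\<dots> \<le> exp (- real n * a)"
  proof (intro measure_pmf.integral_le_const integrable_measure_pmf_bounded[where B=1] AE_pmfI)
    fix x'
    show "measure_pmf.prob (out_dist W q) {y. a < info_density W q n x' y} \<le> exp (- real n * a)"
      by (rule prob_le_by_pmf_le[where R="W x'"])
         (use pmf_out_dist_le_if_info_density_gt[OF assms] in auto)
  qed simp
  finally show ?thesis .
qed

section \<open>Random binning codes and Bob's decoding error\<close>

definition wiretap_code :: "nat \<Rightarrow> nat \<Rightarrow> ('x \<Rightarrow> 'y \<Rightarrow> bool) \<Rightarrow> (nat \<times> nat \<Rightarrow> 'x) \<Rightarrow> ('x, 'y) wtcode" where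
  "wiretap_code M L G h = \<lparr>cM = M, cQ = (\<lambda>i. map_pmf (\<lambda>l. h (i, l)) (pmf_of_set {..<L})),
     cD = (\<lambda>i. {y. \<exists>l<L. G (h (i, l)) y \<and> (\<forall>k\<in>{..<M} \<times> {..<L}. k \<noteq> (i, l) \<longrightarrow> \<not> G (h k) y)})\<rparr>"

lemma valid_wiretap_code: "1 \<le> M \<Longrightarrow> valid_code (wiretap_code M L G h)"
  unfolding valid_code_def wiretap_code_def by auto

lemma cM_wiretap_code [simp]: "cM (wiretap_code M L G h) = M"
  by (simp add: wiretap_code_def)

lemma prob_out_dist_wiretap_code:
  assumes "1 \<le> L"
  shows "measure_pmf.prob (out_dist W (cQ (wiretap_code M L G h) i)) S =
         (\<Sum>l<L. measure_pmf.prob (W (h (i, l))) S) / L"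
  using assms unfolding out_dist_def wiretap_code_def
  by (simp add: bind_map_pmf prob_bind_pmf integral_pmf_of_set lessThan_empty_iff)

lemma pmf_out_dist_wiretap_code:
  assumes "1 \<le> L"
  shows "pmf (out_dist W (cQ (wiretap_code M L G h) i)) z = (\<Sum>l<L. pmf (W (h (i, l))) z) / L"
  using assms unfolding out_dist_def wiretap_code_def
  by (simp add: bind_map_pmf pmf_bind integral_pmf_of_set lessThan_empty_iff)

definition decoding_union_bound ::
    "nat \<Rightarrow> nat \<Rightarrow> ('x \<Rightarrow> 'y pmf) \<Rightarrow> ('x \<Rightarrow> 'y \<Rightarrow> bool) \<Rightarrow> (nat \<times> nat \<Rightarrow> 'x) \<Rightarrow> real" where
  "decoding_union_bound M L W G h = (1 / (real M * real L)) * (\<Sum>k\<in>{..<M} \<times> {..<L}.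
      measure_pmf.prob (W (h k)) {y. \<not> G (h k) y} +
      (\<Sum>k'\<in>{..<M} \<times> {..<L} - {k}. measure_pmf.prob (W (h k)) {y. G (h k') y}))"

lemma eps_B_wiretap_code_le:
  assumes "1 \<le> L"
  shows "eps_B W (wiretap_code M L G h) \<le> decoding_union_bound M L W G h"
proof -
  let ?K = "{..<M} \<times> {..<L}"
  let ?D = "cD (wiretap_code M L G h)"
  have err_le: "measure_pmf.prob (W (h k)) (- ?D (fst k)) \<le>
      measure_pmf.prob (W (h k)) {y. \<not> G (h k) y} +
      (\<Sum>k'\<in>?K - {k}. measure_pmf.prob (W (h k)) {y. G (h k') y})"
    if "k \<in> ?K" for k
  proof -
    have "- ?D (fst k) \<subseteq> {y. \<not> G (h k) y} \<union> (\<Union>k'\<in>?K - {k}. {y. G (h k') y})"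
      using that by (auto simp: wiretap_code_def)
    then have "measure_pmf.prob (W (h k)) (- ?D (fst k)) \<le>
        measure_pmf.prob (W (h k)) ({y. \<not> G (h k) y} \<union> (\<Union>k'\<in>?K - {k}. {y. G (h k') y}))"
      by (rule measure_pmf.finite_measure_mono) simp
    also have "\<dots> \<le> measure_pmf.prob (W (h k)) {y. \<not> G (h k) y} +
        measure_pmf.prob (W (h k)) (\<Union>k'\<in>?K - {k}. {y. G (h k') y})"
      by (rule measure_Un_le) auto
    also have "measure_pmf.prob (W (h k)) (\<Union>k'\<in>?K - {k}. {y. G (h k') y}) \<le>
        (\<Sum>k'\<in>?K - {k}. measure_pmf.prob (W (h k)) {y. G (h k') y})"
      by (rule measure_pmf.finite_measure_subadditive_finite) auto
    finally show ?thesis by simp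
  qed
  have "eps_B W (wiretap_code M L G h) =
        (1 / (real M * real L)) * (\<Sum>k\<in>?K. measure_pmf.prob (W (h k)) (- ?D (fst k)))"
    unfolding eps_B_def cM_wiretap_code
    by (simp add: prob_out_dist_wiretap_code[OF assms] sum.cartesian_product
                  sum_divide_distrib[symmetric] sum_distrib_left case_prod_unfold)
  also have "\<dots> \<le> decoding_union_bound M L W G h"
    unfolding decoding_union_bound_def by (intro mult_left_mono sum_mono err_le) auto
  finally show ?thesis .
qed

lemma expectation_decoding_union_bound_le:
  assumes "1 \<le> M" "1 \<le> L" "0 < n" "0 \<le> a"
  shows "measure_pmf.expectation (Pi_pmf ({..<M} \<times> {..<L}) d (\<lambda>_. q))
           (decoding_union_bound M L W (\<lambda>x y. a < info_density W q n x y))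
         \<le> measure_pmf.expectation q (\<lambda>x. measure_pmf.prob (W x) {y. info_density W q n x y \<le> a})
            + real M * real L * exp (- real n * a)"
proof -
  let ?K = "{..<M} \<times> {..<L}"
  let ?C = "Pi_pmf ?K d (\<lambda>_. q)"
  let ?miss = "\<lambda>x. measure_pmf.prob (W x) {y. \<not> a < info_density W q n x y}"
  let ?confuse = "\<lambda>x x'. measure_pmf.prob (W x) {y. a < info_density W q n x' y}"
  let ?e = "exp (- real n * a)"
  have card_K: "card ?K = M * L" by (simp add: card_cartesian_product)
  have confuse_le: "measure_pmf.expectation ?C (\<lambda>h. ?confuse (h k) (h k')) \<le> ?e"
    if "k \<in> ?K" "k' \<in> ?K" "k \<noteq> k'" for k k'
    using expectation_Pi_pmf_two_components[of ?K k k' d q ?confuse, OF _ that]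
          expectation_prob_info_density_gt_le[OF assms(3,4), where W=W and q=q] by simp
  have "measure_pmf.expectation ?C (decoding_union_bound M L W (\<lambda>x y. a < info_density W q n x y)) =
        (1 / (real M * real L)) * (\<Sum>k\<in>?K. measure_pmf.expectation ?C (\<lambda>h. ?miss (h k)) +
          (\<Sum>k'\<in>?K - {k}. measure_pmf.expectation ?C (\<lambda>h. ?confuse (h k) (h k'))))"
    unfolding decoding_union_bound_def
    by (simp add: integrable_measure_pmf_bounded[where B=1] Bochner_Integration.integral_sum
                  Bochner_Integration.integral_add)
  also have "\<dots> \<le> (1 / (real M * real L)) * (\<Sum>k\<in>?K. measure_pmf.expectation q ?miss + real (card ?K) * ?e)"
  proof (intro mult_left_mono sum_mono add_mono)
    fix k assume "k \<in> ?K"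
    then show "measure_pmf.expectation ?C (\<lambda>h. ?miss (h k)) \<le> measure_pmf.expectation q ?miss"
      using expectation_Pi_pmf_component[of ?K k d q ?miss] by simp
    have "(\<Sum>k'\<in>?K - {k}. measure_pmf.expectation ?C (\<lambda>h. ?confuse (h k) (h k'))) \<le> (\<Sum>k'\<in>?K - {k}. ?e)"
      by (intro sum_mono confuse_le) (use \<open>k \<in> ?K\<close> in auto)
    also have "\<dots> \<le> real (card ?K) * ?e"
      using card_Diff1_le[of ?K k] by (simp only: sum_constant) (intro mult_right_mono; simp flip: of_nat_mult)
    finally show "(\<Sum>k'\<in>?K - {k}. measure_pmf.expectation ?C (\<lambda>h. ?confuse (h k) (h k'))) \<le> real (card ?K) * ?e" .
  qed simp
  also have "\<dots> = measure_pmf.expectation q ?miss + real M * real L * ?e"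
    using assms by (simp add: card_K)
  finally show ?thesis by (simp add: not_less)
qed

lemma integrable_decoding_union_bound: "integrable (measure_pmf C) (decoding_union_bound M L W G)"
proof -
  have int_prob: "integrable (measure_pmf C) (\<lambda>h. measure_pmf.prob (W (h k)) (S h))" for k S
    by (rule integrable_measure_pmf_bounded[where B=1]) simp
  show ?thesis
    unfolding decoding_union_bound_def
    by (rule integrable_mult_right)
       (intro Bochner_Integration.integrable_sum Bochner_Integration.integrable_add int_prob)
qed

section \<open>Resolvability: the view of the eavesdropper\<close>

text \<open>Truncating the likelihood ratio at \<open>exp c\<close> bounds its second moment by \<open>exp c\<close> times its
  mean, which drives the second-moment estimate below; the truncated mass is exactly what the
  information spectrum of Eve's channel controls.\<close>
definition trunc_ratio :: "('x \<Rightarrow> 'z pmf) \<Rightarrow> 'x pmf \<Rightarrow> real \<Rightarrow> 'x \<Rightarrow> 'z \<Rightarrow> real" where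
  "trunc_ratio V q c x z =
     (if pmf (V x) z \<le> exp c * pmf (out_dist V q) z then pmf (V x) z / pmf (out_dist V q) z else 0)"

definition avg_trunc_ratio :: "('x \<Rightarrow> 'z pmf) \<Rightarrow> 'x pmf \<Rightarrow> real \<Rightarrow> 'z \<Rightarrow> real" where
  "avg_trunc_ratio V q c z = measure_pmf.expectation q (\<lambda>x. trunc_ratio V q c x z)"

definition bin_trunc_ratio ::
    "('x \<Rightarrow> 'z pmf) \<Rightarrow> 'x pmf \<Rightarrow> real \<Rightarrow> nat \<Rightarrow> (nat \<times> nat \<Rightarrow> 'x) \<Rightarrow> nat \<Rightarrow> 'z \<Rightarrow> real" where
  "bin_trunc_ratio V q c L h i z = (\<Sum>l<L. trunc_ratio V q c (h (i, l)) z) / real L"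

lemma trunc_ratio_nonneg: "0 \<le> trunc_ratio V q c x z"
  by (simp add: trunc_ratio_def)

lemma trunc_ratio_le_exp: "trunc_ratio V q c x z \<le> exp c"
proof (cases "pmf (out_dist V q) z = 0")
  case False
  then have "0 < pmf (out_dist V q) z" using pmf_nonneg[of "out_dist V q" z] by linarith
  then show ?thesis by (simp add: trunc_ratio_def field_simps)
qed (simp add: trunc_ratio_def)

lemma abs_trunc_ratio_le: "\<bar>trunc_ratio V q c x z\<bar> \<le> exp c"
  using trunc_ratio_nonneg[of V q c x z] trunc_ratio_le_exp[of V q c x z] by simp

lemma pmf_out_dist_times_trunc_ratio_le: "pmf (out_dist V q) z * trunc_ratio V q c x z \<le> pmf (V x) z"
  by (simp add: trunc_ratio_def)

lemma avg_trunc_ratio_nonneg: "0 \<le> avg_trunc_ratio V q c z"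
  unfolding avg_trunc_ratio_def by (rule expectation_pmf_bounds(1)) (rule trunc_ratio_nonneg trunc_ratio_le_exp)+

lemma pmf_out_dist_times_avg_trunc_ratio_le:
  "pmf (out_dist V q) z * avg_trunc_ratio V q c z \<le> pmf (out_dist V q) z"
proof -
  have "pmf (out_dist V q) z * avg_trunc_ratio V q c z =
        measure_pmf.expectation q (\<lambda>x. pmf (out_dist V q) z * trunc_ratio V q c x z)"
    unfolding avg_trunc_ratio_def by simp
  also have "\<dots> \<le> measure_pmf.expectation q (\<lambda>x. pmf (V x) z)"
  proof (rule integral_mono)
    show "integrable (measure_pmf q) (\<lambda>x. pmf (out_dist V q) z * trunc_ratio V q c x z)"
    proof (rule integrable_measure_pmf_bounded[where B="1 * exp c"])
      fix x show "\<bar>pmf (out_dist V q) z * trunc_ratio V q c x z\<bar> \<le> 1 * exp c"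
        unfolding abs_mult by (intro mult_mono abs_trunc_ratio_le) (auto simp: pmf_le_1)
    qed
    show "integrable (measure_pmf q) (\<lambda>x. pmf (V x) z)"
      by (rule integrable_measure_pmf_bounded[where B=1]) (simp add: pmf_le_1)
  qed (rule pmf_out_dist_times_trunc_ratio_le)
  also have "\<dots> = pmf (out_dist V q) z" by (simp add: out_dist_def pmf_bind)
  finally show ?thesis .
qed

lemma avg_trunc_ratio_le_1: "avg_trunc_ratio V q c z \<le> 1"
proof (cases "pmf (out_dist V q) z = 0")
  case True
  then have "trunc_ratio V q c x z = 0" for x by (simp add: trunc_ratio_def)
  then show ?thesis by (simp add: avg_trunc_ratio_def)
next
  case False
  then show ?thesis
    using pmf_out_dist_times_avg_trunc_ratio_le[of V q z c] pmf_nonneg[of "out_dist V q" z]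
    by (simp add: mult_le_cancel_left1)
qed

lemma bin_trunc_ratio_nonneg: "0 \<le> bin_trunc_ratio V q c L h i z"
  unfolding bin_trunc_ratio_def by (intro divide_nonneg_nonneg sum_nonneg trunc_ratio_nonneg) simp

lemma bin_trunc_ratio_le_exp: "bin_trunc_ratio V q c L h i z \<le> exp c"
proof -
  have "(\<Sum>l<L. trunc_ratio V q c (h (i, l)) z) \<le> real L * exp c"
    using sum_bounded_above[of "{..<L}" "\<lambda>l. trunc_ratio V q c (h (i, l)) z" "exp c"]
    by (simp add: trunc_ratio_le_exp)
  then show ?thesis unfolding bin_trunc_ratio_def
    by (cases "L = 0") (auto simp: field_simps)
qed

lemma pmf_out_dist_times_bin_trunc_ratio_le:
  assumes "1 \<le> L"
  shows "pmf (out_dist V q) z * bin_trunc_ratio V q c L h i z \<le>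
         pmf (out_dist V (cQ (wiretap_code M L G h) i)) z"
  unfolding bin_trunc_ratio_def pmf_out_dist_wiretap_code[OF assms] times_divide_eq_right sum_distrib_left
  by (intro divide_right_mono sum_mono pmf_out_dist_times_trunc_ratio_le) simp

definition resolvability_bound ::
    "('x \<Rightarrow> 'z pmf) \<Rightarrow> 'x pmf \<Rightarrow> real \<Rightarrow> nat \<Rightarrow> (nat \<times> nat \<Rightarrow> 'x) \<Rightarrow> nat \<Rightarrow> real" where
  "resolvability_bound V q c L h i =
     measure_pmf.expectation (out_dist V q) (\<lambda>z. \<bar>bin_trunc_ratio V q c L h i z - avg_trunc_ratio V q c z\<bar>)
     + (1 - measure_pmf.expectation (out_dist V q) (bin_trunc_ratio V q c L h i))
     + (1 - measure_pmf.expectation (out_dist V q) (avg_trunc_ratio V q c))"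

text \<open>Pointwise, with \<open>Q u \<le> P\<close> and \<open>Q v \<le> Q\<close>:
  \<open>\<bar>P - Q\<bar> \<le> Q \<bar>u - v\<bar> + (P - Q u) + (Q - Q v)\<close>, and the last two terms sum to \<open>1 - E u\<close>, \<open>1 - E v\<close>.\<close>
lemma tv_out_dist_wiretap_code_le:
  assumes "1 \<le> L"
  shows "(\<Sum>\<^sub>\<infinity>z. \<bar>pmf (out_dist V (cQ (wiretap_code M L G h) i)) z - pmf (out_dist V q) z\<bar>)
         \<le> resolvability_bound V q c L h i"
proof -
  define P where "P = out_dist V (cQ (wiretap_code M L G h) i)"
  define Q where "Q = out_dist V q"
  define u where "u = bin_trunc_ratio V q c L h i"
  define v where "v = avg_trunc_ratio V q c"
  define g where "g z = \<bar>u z - v z\<bar> - u z + (1 - v z)" for z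
  have u: "0 \<le> u z" "u z \<le> exp c" for z
    unfolding u_def by (rule bin_trunc_ratio_nonneg bin_trunc_ratio_le_exp)+
  have v: "0 \<le> v z" "v z \<le> 1" for z
    unfolding v_def by (rule avg_trunc_ratio_nonneg avg_trunc_ratio_le_1)+
  have g_bound: "\<bar>g z\<bar> \<le> 2 * exp c + 2" for z
    using u[of z] v[of z] by (auto simp: g_def abs_if)
  have pointwise: "\<bar>pmf P z - pmf Q z\<bar> \<le> pmf Q z * g z + pmf P z" for z
  proof -
    have "pmf Q z * u z \<le> pmf P z"
      unfolding P_def Q_def u_def by (rule pmf_out_dist_times_bin_trunc_ratio_le[OF assms])
    moreover have "pmf Q z * v z \<le> pmf Q z"
      unfolding Q_def v_def by (rule pmf_out_dist_times_avg_trunc_ratio_le)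
    moreover have "\<bar>pmf Q z * u z - pmf Q z * v z\<bar> = pmf Q z * \<bar>u z - v z\<bar>"
      by (simp add: right_diff_distrib[symmetric] abs_mult)
    ultimately show ?thesis by (simp add: g_def algebra_simps)
  qed
  have summable: "(\<lambda>z. pmf Q z * g z + pmf P z) summable_on UNIV"
    by (intro summable_on_add summable_on_pmf summable_infsum_pmf_times(1)[OF g_bound])
  have "(\<Sum>\<^sub>\<infinity>z. \<bar>pmf P z - pmf Q z\<bar>) \<le> (\<Sum>\<^sub>\<infinity>z. pmf Q z * g z + pmf P z)"
    by (rule infsum_mono[OF summable_on_abs_diff_pmf summable pointwise])
  also have "\<dots> = measure_pmf.expectation Q g + 1"
    by (simp add: infsum_add[OF summable_infsum_pmf_times(1)[OF g_bound] summable_on_pmf]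
                  summable_infsum_pmf_times(2)[OF g_bound] infsum_pmf)
  also have "\<dots> = resolvability_bound V q c L h i"
  proof -
    have bounds: "\<bar>u z\<bar> \<le> exp c + 1" "\<bar>v z\<bar> \<le> exp c + 1" "\<bar>\<bar>u z - v z\<bar>\<bar> \<le> exp c + 1" for z
      using u[of z] v[of z] by (auto simp: abs_if)
    show ?thesis
      using integrable_measure_pmf_bounded[where f=u, OF bounds(1)]
            integrable_measure_pmf_bounded[where f=v, OF bounds(2)]
            integrable_measure_pmf_bounded[where f="\<lambda>z. \<bar>u z - v z\<bar>", OF bounds(3)]
      unfolding resolvability_bound_def g_def Q_def[symmetric] u_def[symmetric] v_def[symmetric]
      by (simp add: Bochner_Integration.integral_add Bochner_Integration.integral_diff)
  qed
  finally show ?thesis unfolding P_def Q_def .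
qed

lemma expectation_bin_trunc_ratio:
  assumes "i < M" "1 \<le> L"
  shows "measure_pmf.expectation (Pi_pmf ({..<M} \<times> {..<L}) d (\<lambda>_. q)) (\<lambda>h. bin_trunc_ratio V q c L h i z)
         = avg_trunc_ratio V q c z"
proof -
  let ?C = "Pi_pmf ({..<M} \<times> {..<L}) d (\<lambda>_. q)"
  have "measure_pmf.expectation ?C (\<lambda>h. bin_trunc_ratio V q c L h i z) =
        (\<Sum>l<L. measure_pmf.expectation ?C (\<lambda>h. trunc_ratio V q c (h (i, l)) z)) / real L"
    unfolding bin_trunc_ratio_def
    by (simp add: Bochner_Integration.integral_sum integrable_measure_pmf_bounded[OF abs_trunc_ratio_le])
  also have "\<dots> = (\<Sum>l<L. avg_trunc_ratio V q c z) / real L"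
    unfolding avg_trunc_ratio_def using assms
    by (intro arg_cong2[where f="(/)"] sum.cong refl expectation_Pi_pmf_component) auto
  also have "\<dots> = avg_trunc_ratio V q c z" using assms by simp
  finally show ?thesis .
qed

lemma expectation_trunc_ratio_product_le:
  fixes M L :: nat
  assumes "i < M" "l < L" "l' < L"
  shows "measure_pmf.expectation (Pi_pmf ({..<M} \<times> {..<L}) d (\<lambda>_. q))
           (\<lambda>h. trunc_ratio V q c (h (i, l)) z * trunc_ratio V q c (h (i, l')) z)
         \<le> (avg_trunc_ratio V q c z)\<^sup>2 + (if l = l' then exp c else 0)"
proof -
  let ?C = "Pi_pmf ({..<M} \<times> {..<L}) d (\<lambda>_. q)"
  define t where "t x = trunc_ratio V q c x z" for x
  define v where "v = avg_trunc_ratio V q c z"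
  have t: "\<bar>t x\<bar> \<le> exp c" "0 \<le> t x" "t x \<le> exp c" for x
    unfolding t_def by (rule abs_trunc_ratio_le trunc_ratio_nonneg trunc_ratio_le_exp)+
  have v: "0 \<le> v" "v \<le> 1" unfolding v_def by (rule avg_trunc_ratio_nonneg avg_trunc_ratio_le_1)+
  have Et: "measure_pmf.expectation q t = v" unfolding v_def avg_trunc_ratio_def t_def ..
  show ?thesis
  proof (cases "l = l'")
    case True
    have "measure_pmf.expectation ?C (\<lambda>h. t (h (i, l)) * t (h (i, l))) = measure_pmf.expectation q (\<lambda>x. t x * t x)"
      by (rule expectation_Pi_pmf_component[where F="\<lambda>x. t x * t x" and k="(i, l)"]) (use assms in auto)
    also have "\<dots> \<le> measure_pmf.expectation q (\<lambda>x. exp c * t x)"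
      by (intro integral_mono integrable_measure_pmf_bounded[where B="exp c * exp c"] mult_right_mono)
         (use t in \<open>auto simp: abs_mult intro: mult_mono\<close>)
    also have "\<dots> = exp c * v" using Et by simp
    also have "\<dots> \<le> v\<^sup>2 + exp c"
    proof -
      have "exp c * v \<le> exp c * 1" using v by (intro mult_left_mono) auto
      then show ?thesis using zero_le_power2[of v] by linarith
    qed
    finally show ?thesis using True unfolding t_def v_def by simp
  next
    case False
    have "measure_pmf.expectation ?C (\<lambda>h. t (h (i, l)) * t (h (i, l'))) =
          measure_pmf.expectation (pair_pmf q q) (\<lambda>u. t (fst u) * t (snd u))"
      using False assms by (intro expectation_Pi_pmf_two_components[where F="\<lambda>x y. t x * t y"]) auto
    also have "\<dots> = v\<^sup>2"
      using expectation_pair_pmf_mult[where f=t and g=t, OF t(1) t(1)] Et by (simp add: power2_eq_square)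
    finally show ?thesis using False unfolding t_def v_def by simp
  qed
qed

lemma expectation_bin_trunc_ratio_sq_le:
  assumes "i < M" "1 \<le> L"
  shows "measure_pmf.expectation (Pi_pmf ({..<M} \<times> {..<L}) d (\<lambda>_. q)) (\<lambda>h. (bin_trunc_ratio V q c L h i z)\<^sup>2)
         \<le> exp c / real L + (avg_trunc_ratio V q c z)\<^sup>2"
proof -
  let ?C = "Pi_pmf ({..<M} \<times> {..<L}) d (\<lambda>_. q)"
  define t where "t x = trunc_ratio V q c x z" for x
  define v where "v = avg_trunc_ratio V q c z"
  have tt_bound: "\<bar>t x * t x'\<bar> \<le> exp c * exp c" for x x'
    unfolding abs_mult t_def by (intro mult_mono abs_trunc_ratio_le) auto
  have "measure_pmf.expectation ?C (\<lambda>h. (bin_trunc_ratio V q c L h i z)\<^sup>2) =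
        (\<Sum>l<L. \<Sum>l'<L. measure_pmf.expectation ?C (\<lambda>h. t (h (i, l)) * t (h (i, l')))) / (real L)\<^sup>2"
    unfolding bin_trunc_ratio_def t_def[symmetric] power_divide
    by (simp add: power2_eq_square sum_product Bochner_Integration.integral_sum
                  integrable_measure_pmf_bounded[OF tt_bound])
  also have "\<dots> \<le> (\<Sum>l<L. \<Sum>l'<L. v\<^sup>2 + (if l = l' then exp c else 0)) / (real L)\<^sup>2"
    unfolding t_def v_def by (intro divide_right_mono sum_mono expectation_trunc_ratio_product_le assms) auto
  also have "\<dots> = exp c / real L + v\<^sup>2"
    using assms by (simp add: sum.distrib power2_eq_square field_simps)
  finally show ?thesis unfolding v_def .
qed

lemma expectation_bin_trunc_ratio_dev_sq_le:
  assumes "i < M" "1 \<le> L"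
  shows "measure_pmf.expectation (Pi_pmf ({..<M} \<times> {..<L}) d (\<lambda>_. q))
           (\<lambda>h. (bin_trunc_ratio V q c L h i z - avg_trunc_ratio V q c z)\<^sup>2) \<le> exp c / real L"
proof -
  let ?C = "Pi_pmf ({..<M} \<times> {..<L}) d (\<lambda>_. q)"
  define u where "u h = bin_trunc_ratio V q c L h i z" for h
  define v where "v = avg_trunc_ratio V q c z"
  have u: "\<bar>u h\<bar> \<le> exp c" for h
    unfolding u_def using bin_trunc_ratio_nonneg[of V q c L h i z] bin_trunc_ratio_le_exp[of V q c L h i z]
    by (simp add: abs_of_nonneg)
  have u2: "\<bar>(u h)\<^sup>2\<bar> \<le> exp c * exp c" for h
    unfolding power2_eq_square abs_mult by (intro mult_mono) (use u[of h] in auto)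
  have "measure_pmf.expectation ?C (\<lambda>h. (u h - v)\<^sup>2) =
        measure_pmf.expectation ?C (\<lambda>h. (u h)\<^sup>2) - 2 * v * measure_pmf.expectation ?C u + v\<^sup>2"
    by (simp add: power2_diff integrable_measure_pmf_bounded[where f=u, OF u]
                  integrable_measure_pmf_bounded[where f="\<lambda>h. (u h)\<^sup>2", OF u2])
  also have "\<dots> \<le> exp c / real L"
    using expectation_bin_trunc_ratio_sq_le[OF assms, of d q V c z] expectation_bin_trunc_ratio[OF assms, of d q V c z]
    unfolding u_def v_def by (simp add: power2_eq_square)
  finally show ?thesis unfolding u_def v_def .
qed

text \<open>AM-GM, used instead of Jensen's \<open>E \<bar>X\<bar> \<le> sqrt (E X\<^sup>2)\<close>; the parameter \<open>r\<close> is tuned later.\<close>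
lemma abs_le_sq_div_plus: "0 < r \<Longrightarrow> \<bar>x::real\<bar> \<le> x\<^sup>2 / (2 * r) + r / 2"
proof -
  assume r: "0 < r"
  have "0 \<le> (\<bar>x\<bar> - r)\<^sup>2" by simp
  then have "2 * r * \<bar>x\<bar> \<le> x\<^sup>2 + r\<^sup>2" by (simp add: power2_diff algebra_simps)
  then show ?thesis using r by (simp add: field_simps power2_eq_square)
qed

lemma expectation_abs_bin_trunc_ratio_dev_le:
  assumes "i < M" "1 \<le> L" "0 < r"
  shows "measure_pmf.expectation (Pi_pmf ({..<M} \<times> {..<L}) d (\<lambda>_. q))
           (\<lambda>h. \<bar>bin_trunc_ratio V q c L h i z - avg_trunc_ratio V q c z\<bar>)
         \<le> exp c / (2 * r * real L) + r / 2"
proof -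
  let ?C = "Pi_pmf ({..<M} \<times> {..<L}) d (\<lambda>_. q)"
  define w where "w h = bin_trunc_ratio V q c L h i z - avg_trunc_ratio V q c z" for h
  have w: "\<bar>w h\<bar> \<le> exp c + 1" for h
    using bin_trunc_ratio_nonneg[of V q c L h i z] bin_trunc_ratio_le_exp[of V q c L h i z]
          avg_trunc_ratio_nonneg[of V q c z] avg_trunc_ratio_le_1[of V q c z]
    by (simp add: w_def abs_le_iff)
  have w2: "\<bar>(w h)\<^sup>2\<bar> \<le> (exp c + 1) * (exp c + 1)" for h
    unfolding power2_eq_square abs_mult by (intro mult_mono) (use w[of h] in auto)
  have int_w2: "integrable (measure_pmf ?C) (\<lambda>h. (w h)\<^sup>2)"
    by (rule integrable_measure_pmf_bounded[where f="\<lambda>h. (w h)\<^sup>2", OF w2])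
  have "measure_pmf.expectation ?C (\<lambda>h. \<bar>w h\<bar>) \<le> measure_pmf.expectation ?C (\<lambda>h. (w h)\<^sup>2 / (2 * r) + r / 2)"
  proof (rule integral_mono)
    show "integrable (measure_pmf ?C) (\<lambda>h. \<bar>w h\<bar>)"
      by (rule integrable_measure_pmf_bounded[where B="exp c + 1"]) (simp add: w)
    show "integrable (measure_pmf ?C) (\<lambda>h. (w h)\<^sup>2 / (2 * r) + r / 2)"
      using int_w2 by simp
  qed (rule abs_le_sq_div_plus[OF assms(3)])
  also have "\<dots> = measure_pmf.expectation ?C (\<lambda>h. (w h)\<^sup>2) / (2 * r) + r / 2"
    using int_w2 by simp
  also have "\<dots> \<le> exp c / real L / (2 * r) + r / 2"
    using expectation_bin_trunc_ratio_dev_sq_le[OF assms(1,2), of d q V c z] assms(3)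
    unfolding w_def by (intro add_right_mono divide_right_mono) auto
  finally show ?thesis unfolding w_def by (simp add: field_simps)
qed

lemma expectation_resolvability_bound_le:
  assumes "i < M" "1 \<le> L" "0 < r"
  shows "measure_pmf.expectation (Pi_pmf ({..<M} \<times> {..<L}) d (\<lambda>_. q)) (\<lambda>h. resolvability_bound V q c L h i)
         \<le> exp c / (2 * r * real L) + r / 2 + 2 * (1 - measure_pmf.expectation (out_dist V q) (avg_trunc_ratio V q c))"
proof -
  let ?C = "Pi_pmf ({..<M} \<times> {..<L}) d (\<lambda>_. q)"
  let ?Q = "out_dist V q"
  let ?u = "\<lambda>h. bin_trunc_ratio V q c L h i" and ?v = "avg_trunc_ratio V q c"
  have u: "\<bar>?u h z\<bar> \<le> exp c" for h z
    using bin_trunc_ratio_nonneg[of V q c L h i z] bin_trunc_ratio_le_exp[of V q c L h i z] by simp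
  have v: "\<bar>?v z\<bar> \<le> 1" for z
    using avg_trunc_ratio_nonneg[of V q c z] avg_trunc_ratio_le_1[of V q c z] by simp
  have dev: "\<bar>\<bar>?u h z - ?v z\<bar>\<bar> \<le> exp c + 1" for h z
    using u[of h z] v[of z] by linarith
  have E_dev: "\<bar>measure_pmf.expectation ?Q (\<lambda>z. \<bar>?u h z - ?v z\<bar>)\<bar> \<le> exp c + 1" for h
    by (rule abs_expectation_pmf_le) (rule dev)
  have E_u: "\<bar>measure_pmf.expectation ?Q (?u h)\<bar> \<le> exp c" for h
    by (rule abs_expectation_pmf_le) (rule u)
  have "measure_pmf.expectation ?C (\<lambda>h. measure_pmf.expectation ?Q (\<lambda>z. \<bar>?u h z - ?v z\<bar>)) =
        measure_pmf.expectation ?Q (\<lambda>z. measure_pmf.expectation ?C (\<lambda>h. \<bar>?u h z - ?v z\<bar>))"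
    by (rule expectation_swap_pmf_bounded[OF dev])
  also have "\<dots> \<le> exp c / (2 * r * real L) + r / 2"
  proof (rule measure_pmf.integral_le_const)
    show "integrable (measure_pmf ?Q) (\<lambda>z. measure_pmf.expectation ?C (\<lambda>h. \<bar>?u h z - ?v z\<bar>))"
      by (rule integrable_measure_pmf_bounded[where B="exp c + 1"], rule abs_expectation_pmf_le) (rule dev)
  qed (simp add: expectation_abs_bin_trunc_ratio_dev_le[OF assms])
  finally have dev_le: "measure_pmf.expectation ?C (\<lambda>h. measure_pmf.expectation ?Q (\<lambda>z. \<bar>?u h z - ?v z\<bar>))
                        \<le> exp c / (2 * r * real L) + r / 2" .
  have "measure_pmf.expectation ?C (\<lambda>h. measure_pmf.expectation ?Q (?u h)) =
        measure_pmf.expectation ?Q (\<lambda>z. measure_pmf.expectation ?C (\<lambda>h. ?u h z))"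
    by (rule expectation_swap_pmf_bounded[OF u])
  also have "\<dots> = measure_pmf.expectation ?Q ?v"
    by (simp add: expectation_bin_trunc_ratio[OF assms(1,2)])
  finally have u_eq: "measure_pmf.expectation ?C (\<lambda>h. measure_pmf.expectation ?Q (?u h)) =
                      measure_pmf.expectation ?Q ?v" .
  show ?thesis
    using dev_le u_eq unfolding resolvability_bound_def
    by (simp add: integrable_measure_pmf_bounded[OF E_dev] integrable_measure_pmf_bounded[OF E_u])
qed

lemma prob_info_density_le_le_expectation_trunc_ratio:
  assumes "x \<in> set_pmf q" "0 < n"
  shows "measure_pmf.prob (V x) {z. info_density V q n x z \<le> b}
         \<le> measure_pmf.expectation (out_dist V q) (trunc_ratio V q (real n * b) x)"
proof -
  let ?S = "{z. info_density V q n x z \<le> b}"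
  let ?Q = "out_dist V q"
  have ind: "\<And>z. \<bar>indicator ?S z\<bar> \<le> (1::real)" by (simp add: indicator_def)
  have pointwise: "pmf (V x) z * indicator ?S z \<le> pmf ?Q z * trunc_ratio V q (real n * b) x z" for z
  proof (cases "z \<in> ?S \<and> z \<in> set_pmf (V x)")
    case True
    then have "z \<in> set_pmf ?Q" using assms(1) by (auto simp: out_dist_def)
    then have "0 < pmf ?Q z" by (rule pmf_positive)
    then show ?thesis
      using True pmf_le_if_info_density_le[OF assms(2), of V q z x b] by (simp add: trunc_ratio_def)
  next
    case False
    then have "pmf (V x) z * indicator ?S z = 0" by (auto simp: indicator_def set_pmf_eq)
    then show ?thesis
      using mult_nonneg_nonneg[OF pmf_nonneg[of ?Q z] trunc_ratio_nonneg[of V q "real n * b" x z]] by linarith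
  qed
  have "measure_pmf.prob (V x) ?S = (\<Sum>\<^sub>\<infinity>z. pmf (V x) z * indicator ?S z)"
    using summable_infsum_pmf_times(2)[where g="indicator ?S", OF ind] by simp
  also have "\<dots> \<le> (\<Sum>\<^sub>\<infinity>z. pmf ?Q z * trunc_ratio V q (real n * b) x z)"
    by (intro infsum_mono pointwise summable_infsum_pmf_times(1)[where g="indicator ?S", OF ind]
              summable_infsum_pmf_times(1)[OF abs_trunc_ratio_le])
  also have "\<dots> = measure_pmf.expectation ?Q (trunc_ratio V q (real n * b) x)"
    by (rule summable_infsum_pmf_times(2)[OF abs_trunc_ratio_le])
  finally show ?thesis .
qed

lemma expectation_prob_info_density_le_le:
  assumes "0 < n"
  shows "measure_pmf.expectation q (\<lambda>x. measure_pmf.prob (V x) {z. info_density V q n x z \<le> b})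
         \<le> measure_pmf.expectation (out_dist V q) (avg_trunc_ratio V q (real n * b))"
proof -
  let ?t = "trunc_ratio V q (real n * b)"
  have "measure_pmf.expectation q (\<lambda>x. measure_pmf.prob (V x) {z. info_density V q n x z \<le> b})
        \<le> measure_pmf.expectation q (\<lambda>x. measure_pmf.expectation (out_dist V q) (?t x))"
  proof (rule integral_mono_AE)
    show "integrable (measure_pmf q) (\<lambda>x. measure_pmf.prob (V x) {z. info_density V q n x z \<le> b})"
      by (rule integrable_measure_pmf_bounded[where B=1]) simp
    show "integrable (measure_pmf q) (\<lambda>x. measure_pmf.expectation (out_dist V q) (?t x))"
      by (rule integrable_measure_pmf_bounded[where B="exp (real n * b)"], rule abs_expectation_pmf_le)
         (rule abs_trunc_ratio_le)
  qed (intro AE_pmfI prob_info_density_le_le_expectation_trunc_ratio assms)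
  also have "\<dots> = measure_pmf.expectation (out_dist V q) (avg_trunc_ratio V q (real n * b))"
    unfolding avg_trunc_ratio_def by (rule expectation_swap_pmf_bounded[OF abs_trunc_ratio_le])
  finally show ?thesis .
qed

lemma abs_resolvability_bound_le: "\<bar>resolvability_bound V q c L h i\<bar> \<le> exp c + 3"
proof -
  let ?Q = "out_dist V q"
  let ?u = "bin_trunc_ratio V q c L h i" and ?v = "avg_trunc_ratio V q c"
  have dev: "\<bar>?u z - ?v z\<bar> \<le> exp c + 1" for z
    using bin_trunc_ratio_nonneg[of V q c L h i z] bin_trunc_ratio_le_exp[of V q c L h i z]
          avg_trunc_ratio_nonneg[of V q c z] avg_trunc_ratio_le_1[of V q c z] by linarith
  note expectation_pmf_bounds[of "\<lambda>z. \<bar>?u z - ?v z\<bar>" "exp c + 1" ?Q, OF abs_ge_zero dev]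
  moreover have "0 \<le> measure_pmf.expectation ?Q ?u" "measure_pmf.expectation ?Q ?u \<le> exp c"
    by (rule expectation_pmf_bounds, rule bin_trunc_ratio_nonneg, rule bin_trunc_ratio_le_exp)+
  moreover have "0 \<le> measure_pmf.expectation ?Q ?v" "measure_pmf.expectation ?Q ?v \<le> 1"
    by (rule expectation_pmf_bounds, rule avg_trunc_ratio_nonneg, rule avg_trunc_ratio_le_1)+
  ultimately show ?thesis unfolding resolvability_bound_def by linarith
qed

lemma resolvability_bound_nonneg: "1 \<le> L \<Longrightarrow> 0 \<le> resolvability_bound V q c L h i"
  by (rule order_trans[OF infsum_nonneg tv_out_dist_wiretap_code_le]) auto

lemma d_E_wiretap_code_le:
  assumes "1 \<le> M" "1 \<le> L"
  shows "d_E V (wiretap_code M L G h) \<le> (2 / real M) * (\<Sum>i<M. resolvability_bound V q c L h i)"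
proof (cases "M = 1")
  case True
  then show ?thesis unfolding d_E_def using resolvability_bound_nonneg[OF assms(2)]
    by (simp add: sum_nonneg)
next
  case False
  with assms have M2: "2 \<le> M" by simp
  let ?P = "\<lambda>i. out_dist V (cQ (wiretap_code M L G h) i)"
  let ?e = "\<lambda>i. resolvability_bound V q c L h i"
  have pair: "(\<Sum>\<^sub>\<infinity>z. \<bar>pmf (?P i) z - pmf (?P j) z\<bar>) \<le> ?e i + ?e j" for i j
    using infsum_abs_diff_pmf_triangle[of "?P i" "?P j" "out_dist V q"]
          tv_out_dist_wiretap_code_le[OF assms(2), of V M G h i q c]
          tv_out_dist_wiretap_code_le[OF assms(2), of V M G h j q c] by linarith
  have "d_E V (wiretap_code M L G h) \<le>
        (1 / (real M * (real M - 1))) * (\<Sum>i<M. \<Sum>j\<in>{..<M} - {i}. ?e i + ?e j)"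
    unfolding d_E_def cM_wiretap_code using M2 by (intro mult_left_mono sum_mono pair) auto
  also have "(\<Sum>i<M. \<Sum>j\<in>{..<M} - {i}. ?e i + ?e j) = (\<Sum>i<M. (real M - 1) * ?e i + ((\<Sum>j<M. ?e j) - ?e i))"
  proof (rule sum.cong[OF refl])
    fix i assume i: "i \<in> {..<M}"
    then have "real (card ({..<M} - {i})) = real M - 1" using M2 by (simp add: of_nat_diff)
    then show "(\<Sum>j\<in>{..<M} - {i}. ?e i + ?e j) = (real M - 1) * ?e i + ((\<Sum>j<M. ?e j) - ?e i)"
      using i by (simp add: sum.distrib sum_diff1)
  qed
  also have "\<dots> = 2 * (real M - 1) * (\<Sum>i<M. ?e i)"
    by (simp add: sum.distrib sum_subtractf sum_distrib_left algebra_simps)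
  also have "(1 / (real M * (real M - 1))) * (2 * (real M - 1) * (\<Sum>i<M. ?e i)) = (2 / real M) * (\<Sum>i<M. ?e i)"
    using M2 by (simp add: field_simps)
  finally show ?thesis .
qed

section \<open>Good codes for a single block length\<close>

lemma exists_wiretap_code:
  fixes W :: "'x \<Rightarrow> 'y pmf" and V :: "'x \<Rightarrow> 'z pmf" and q :: "'x pmf"
  assumes "0 < n" "1 \<le> M" "1 \<le> L" "0 \<le> a" "0 < r"
  defines "G \<equiv> \<lambda>x y. a < info_density W q n x y"
  shows "\<exists>h. eps_B W (wiretap_code M L G h) + d_E V (wiretap_code M L G h)
     \<le> measure_pmf.expectation q (\<lambda>x. measure_pmf.prob (W x) {y. info_density W q n x y \<le> a})
       + real M * real L * exp (- real n * a)
       + 2 * (exp (real n * b) / (2 * r * real L) + r / 2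
              + 2 * (1 - measure_pmf.expectation q (\<lambda>x. measure_pmf.prob (V x) {z. info_density V q n x z \<le> b})))
       + r"
proof -
  define C where "C = Pi_pmf ({..<M} \<times> {..<L}) undefined (\<lambda>_. q)"
  define c where "c = real n * b"
  define \<kappa> where "\<kappa> = exp c / (2 * r * real L) + r / 2 + 2 * (1 -
     measure_pmf.expectation q (\<lambda>x. measure_pmf.prob (V x) {z. info_density V q n x z \<le> b}))"
  define B where "B h = decoding_union_bound M L W G h + (2 / real M) * (\<Sum>i<M. resolvability_bound V q c L h i)" for h
  have int_res: "integrable (measure_pmf C) (\<lambda>h. resolvability_bound V q c L h i)" for i
    by (rule integrable_measure_pmf_bounded[OF abs_resolvability_bound_le])
  note int_dec = integrable_decoding_union_bound[of C M L W G]
  have E_res: "measure_pmf.expectation C (\<lambda>h. resolvability_bound V q c L h i) \<le> \<kappa>" if "i < M" for i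
    using expectation_resolvability_bound_le[OF that assms(3,5), of undefined q V c]
          expectation_prob_info_density_le_le[OF assms(1), of q V b]
    unfolding C_def \<kappa>_def c_def by simp
  have "measure_pmf.expectation C B =
        measure_pmf.expectation C (decoding_union_bound M L W G) +
        (2 / real M) * (\<Sum>i<M. measure_pmf.expectation C (\<lambda>h. resolvability_bound V q c L h i))"
    unfolding B_def by (simp add: int_res int_dec Bochner_Integration.integral_sum)
  also have "\<dots> \<le> (measure_pmf.expectation q (\<lambda>x. measure_pmf.prob (W x) {y. info_density W q n x y \<le> a})
                    + real M * real L * exp (- real n * a)) + (2 / real M) * (\<Sum>i<M. \<kappa>)"
    unfolding C_def G_def
    by (intro add_mono expectation_decoding_union_bound_le assms mult_left_mono sum_mono E_res[unfolded C_def])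
       auto
  finally have E_B: "measure_pmf.expectation C B \<le>
      measure_pmf.expectation q (\<lambda>x. measure_pmf.prob (W x) {y. info_density W q n x y \<le> a})
      + real M * real L * exp (- real n * a) + 2 * \<kappa>"
    using assms(2) by simp
  have "integrable (measure_pmf C) B"
    unfolding B_def
    by (rule Bochner_Integration.integrable_add[OF int_dec integrable_mult_right]) (intro Bochner_Integration.integrable_sum int_res)
  then obtain h where h: "B h \<le> measure_pmf.expectation C B + r"
    using exists_in_set_pmf_le_expectation[OF _ assms(5)] by blast
  have "eps_B W (wiretap_code M L G h) + d_E V (wiretap_code M L G h) \<le> B h"
    unfolding B_def by (intro add_mono eps_B_wiretap_code_le d_E_wiretap_code_le assms)
  then show ?thesis using h E_B unfolding \<kappa>_def c_def by (intro exI[of _ h]) linarith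
qed

section \<open>Leakage and variational distance\<close>

lemma mult_ln_div_le:
  fixes P R c B :: real
  assumes "0 \<le> P" "0 \<le> R" "P \<le> c * R" "1 \<le> c" "max 1 (ln c) \<le> B"
  shows "P * ln (P / R) \<le> B * \<bar>P - R\<bar> + (P - R)"
proof (cases "P = 0 \<or> R = 0")
  case True
  then have "P = 0" using assms(1,3) by auto
  then show ?thesis using assms mult_right_mono[of 1 B R] by simp
next
  case False
  then have R: "0 < R" and P: "0 < P" using assms by auto
  define t where "t = P / R"
  have t: "0 < t" "t \<le> c" using P R assms(3) by (auto simp: t_def field_simps)
  have "t * ln t - t + 1 \<le> B * \<bar>t - 1\<bar>"
  proof (cases "1 \<le> t")
    case True
    have "t * ln t - t + 1 \<le> (t - 1) * ln t"
      using ln_le_minus_one[OF t(1)] by (simp add: algebra_simps)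
    also have "\<dots> \<le> (t - 1) * B"
    proof (intro mult_left_mono)
      have "ln t \<le> ln c" using True t by simp
      then show "ln t \<le> B" using assms(5) by simp
    qed (use True in simp)
    finally show ?thesis using True by (simp add: mult.commute)
  next
    case False
    have "t * ln t \<le> 0" using t False by (intro mult_nonneg_nonpos) auto
    moreover have "1 - t \<le> B * (1 - t)" using False assms(5) by (simp add: mult_le_cancel_right1)
    ultimately have "t * ln t - t + 1 \<le> B * (1 - t)" by linarith
    then show ?thesis using False by (simp add: abs_if)
  qed
  then have "R * (t * ln t) \<le> R * (B * \<bar>t - 1\<bar> + t - 1)" using R by (intro mult_left_mono) auto
  moreover have "P * ln (P / R) = R * (t * ln t)" "R * \<bar>t - 1\<bar> = \<bar>P - R\<bar>" "R * t = P"
    using R by (simp_all add: t_def abs_mult[symmetric] field_simps)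
  ultimately show ?thesis by (simp add: algebra_simps)
qed

lemma mult_ln_div_ge:
  fixes P R :: real
  assumes "0 \<le> P" "0 \<le> R" "R = 0 \<Longrightarrow> P = 0"
  shows "P - R \<le> P * ln (P / R)"
proof (cases "P = 0")
  case False
  then have P: "0 < P" and R: "0 < R" using assms by (auto simp: less_le)
  have "1 - R / P \<le> ln (P / R)"
    using ln_le_minus_one[of "R / P"] P R by (simp add: ln_div)
  then have "P * (1 - R / P) \<le> P * ln (P / R)" using P by (intro mult_left_mono) auto
  then show ?thesis using P by (simp add: algebra_simps)
qed (use assms(2) in simp)

lemma kl_div_nonneg:
  assumes "\<And>z. pmf R z = 0 \<Longrightarrow> pmf P z = 0"
  shows "0 \<le> kl_div P (pmf R)"
proof (cases "(\<lambda>z. pmf P z * ln (pmf P z / pmf R z)) summable_on UNIV")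
  case True
  have "0 = (\<Sum>\<^sub>\<infinity>z. pmf P z - pmf R z)"
    by (simp add: infsum_diff summable_on_pmf infsum_pmf)
  also have "\<dots> \<le> kl_div P (pmf R)"
    unfolding kl_div_def
    by (rule infsum_mono[OF summable_on_diff[OF summable_on_pmf summable_on_pmf] True])
       (intro mult_ln_div_ge pmf_nonneg assms)
  finally show ?thesis .
qed (simp add: kl_div_def infsum_not_exists)

lemma kl_div_le_l1:
  assumes "\<And>z. pmf P z \<le> c * pmf R z" "1 \<le> c"
  shows "kl_div P (pmf R) \<le> max 1 (ln c) * (\<Sum>\<^sub>\<infinity>z. \<bar>pmf P z - pmf R z\<bar>)"
proof (cases "(\<lambda>z. pmf P z * ln (pmf P z / pmf R z)) summable_on UNIV")
  case True
  let ?B = "max 1 (ln c)"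
  have "kl_div P (pmf R) \<le> (\<Sum>\<^sub>\<infinity>z. ?B * \<bar>pmf P z - pmf R z\<bar> + (pmf P z - pmf R z))"
    unfolding kl_div_def
    by (rule infsum_mono[OF True summable_on_add[OF summable_on_cmult_right[OF summable_on_abs_diff_pmf]
                                                   summable_on_diff[OF summable_on_pmf summable_on_pmf]]])
       (rule mult_ln_div_le[OF pmf_nonneg pmf_nonneg assms order.refl])
  also have "\<dots> = ?B * (\<Sum>\<^sub>\<infinity>z. \<bar>pmf P z - pmf R z\<bar>)"
    by (simp add: infsum_add infsum_diff summable_on_cmult_right summable_on_abs_diff_pmf
                  summable_on_diff summable_on_pmf infsum_pmf infsum_cmult_right')
  finally show ?thesis .
next
  case False
  then show ?thesis
    by (simp add: kl_div_def infsum_not_exists infsum_nonneg)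
qed

lemma eve_mix_eq_pmf_mixture:
  assumes "1 \<le> cM \<Phi>"
  shows "eve_mix V \<Phi> = pmf (bind_pmf (pmf_of_set {..<cM \<Phi>}) (\<lambda>i. out_dist V (cQ \<Phi> i)))"
  using assms by (auto simp: fun_eq_iff eve_mix_def pmf_bind integral_pmf_of_set lessThan_empty_iff)

lemma pmf_out_dist_le_eve_mix:
  assumes "i < cM \<Phi>"
  shows "pmf (out_dist V (cQ \<Phi> i)) z \<le> real (cM \<Phi>) * eve_mix V \<Phi> z"
  using assms member_le_sum[of i "{..<cM \<Phi>}" "\<lambda>j. pmf (out_dist V (cQ \<Phi> j)) z"]
  by (simp add: eve_mix_def)

lemma tv_eve_mix_le:
  assumes "1 \<le> cM \<Phi>"
  shows "(\<Sum>\<^sub>\<infinity>z. \<bar>pmf (out_dist V (cQ \<Phi> i)) z - eve_mix V \<Phi> z\<bar>) \<le>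
         (1 / real (cM \<Phi>)) * (\<Sum>j<cM \<Phi>. \<Sum>\<^sub>\<infinity>z. \<bar>pmf (out_dist V (cQ \<Phi> i)) z - pmf (out_dist V (cQ \<Phi> j)) z\<bar>)"
proof -
  let ?M = "cM \<Phi>" and ?P = "\<lambda>i. out_dist V (cQ \<Phi> i)"
  let ?d = "\<lambda>j z. \<bar>pmf (?P i) z - pmf (?P j) z\<bar>"
  have pointwise: "\<bar>pmf (?P i) z - eve_mix V \<Phi> z\<bar> \<le> (1 / real ?M) * (\<Sum>j<?M. ?d j z)" for z
  proof -
    have "pmf (?P i) z - eve_mix V \<Phi> z = (1 / real ?M) * (\<Sum>j<?M. pmf (?P i) z - pmf (?P j) z)"
      using assms by (simp add: eve_mix_def sum_subtractf field_simps)
    then show ?thesis by (simp add: abs_mult sum_abs divide_right_mono)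
  qed
  have "(\<Sum>\<^sub>\<infinity>z. \<bar>pmf (?P i) z - eve_mix V \<Phi> z\<bar>) \<le> (\<Sum>\<^sub>\<infinity>z. (1 / real ?M) * (\<Sum>j<?M. ?d j z))"
  proof (rule infsum_mono)
    show "(\<lambda>z. \<bar>pmf (?P i) z - eve_mix V \<Phi> z\<bar>) summable_on UNIV"
      unfolding eve_mix_eq_pmf_mixture[OF assms] by (rule summable_on_abs_diff_pmf)
    show "(\<lambda>z. (1 / real ?M) * (\<Sum>j<?M. ?d j z)) summable_on UNIV"
      by (intro summable_on_cmult_right summable_on_sum summable_on_abs_diff_pmf) auto
  qed (rule pointwise)
  also have "\<dots> = (1 / real ?M) * (\<Sum>j<?M. \<Sum>\<^sub>\<infinity>z. ?d j z)"
    by (subst infsum_cmult_right', subst summable_on_sum(2)) (auto intro: summable_on_abs_diff_pmf)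
  finally show ?thesis .
qed

lemma eps_B_nonneg: "0 \<le> eps_B W \<Phi>"
  unfolding eps_B_def by (intro mult_nonneg_nonneg sum_nonneg) auto

lemma d_E_nonneg: "0 \<le> d_E V \<Phi>"
proof -
  have "0 \<le> real (cM \<Phi>) * (real (cM \<Phi>) - 1)" by (cases "cM \<Phi>") auto
  then show ?thesis unfolding d_E_def by (intro mult_nonneg_nonneg sum_nonneg infsum_nonneg) auto
qed

lemma I_E_nonneg:
  assumes "1 \<le> cM \<Phi>"
  shows "0 \<le> I_E V \<Phi>"
  unfolding I_E_def
proof (intro sum_nonneg mult_nonneg_nonneg)
  fix i assume i: "i \<in> {..<cM \<Phi>}"
  have "pmf (out_dist V (cQ \<Phi> i)) z = 0" if "eve_mix V \<Phi> z = 0" for z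
    using pmf_out_dist_le_eve_mix[of i \<Phi> V z] i that pmf_nonneg[of "out_dist V (cQ \<Phi> i)" z] by simp
  then show "0 \<le> kl_div (out_dist V (cQ \<Phi> i)) (eve_mix V \<Phi>)"
    unfolding eve_mix_eq_pmf_mixture[OF assms] by (rule kl_div_nonneg)
qed simp

lemma kl_div_eve_mix_le:
  assumes "i < cM \<Phi>"
  shows "kl_div (out_dist V (cQ \<Phi> i)) (eve_mix V \<Phi>) \<le> max 1 (ln (real (cM \<Phi>))) *
           ((1 / real (cM \<Phi>)) * (\<Sum>j<cM \<Phi>. \<Sum>\<^sub>\<infinity>z. \<bar>pmf (out_dist V (cQ \<Phi> i)) z - pmf (out_dist V (cQ \<Phi> j)) z\<bar>))"
proof -
  have M: "1 \<le> cM \<Phi>" using assms by simp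
  have "kl_div (out_dist V (cQ \<Phi> i)) (eve_mix V \<Phi>) \<le>
        max 1 (ln (real (cM \<Phi>))) * (\<Sum>\<^sub>\<infinity>z. \<bar>pmf (out_dist V (cQ \<Phi> i)) z - eve_mix V \<Phi> z\<bar>)"
    using kl_div_le_l1[of "out_dist V (cQ \<Phi> i)" "real (cM \<Phi>)"] pmf_out_dist_le_eve_mix[OF assms, of V] M
    unfolding eve_mix_eq_pmf_mixture[OF M] by simp
  also have "\<dots> \<le> max 1 (ln (real (cM \<Phi>))) *
      ((1 / real (cM \<Phi>)) * (\<Sum>j<cM \<Phi>. \<Sum>\<^sub>\<infinity>z. \<bar>pmf (out_dist V (cQ \<Phi> i)) z - pmf (out_dist V (cQ \<Phi> j)) z\<bar>))"
    by (intro mult_left_mono tv_eve_mix_le M) auto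
  finally show ?thesis .
qed

lemma I_E_le_d_E:
  assumes "1 \<le> cM \<Phi>"
  shows "I_E V \<Phi> \<le> max 1 (ln (real (cM \<Phi>))) * d_E V \<Phi>"
proof -
  define M where "M = cM \<Phi>"
  define B where "B = max 1 (ln (real M))"
  define D where "D i j = (\<Sum>\<^sub>\<infinity>z. \<bar>pmf (out_dist V (cQ \<Phi> i)) z - pmf (out_dist V (cQ \<Phi> j)) z\<bar>)" for i j
  define S where "S = (\<Sum>i<M. \<Sum>j\<in>{..<M} - {i}. D i j)"
  have M: "1 \<le> M" using assms by (simp add: M_def)
  have B: "1 \<le> B" by (simp add: B_def)
  have "(\<Sum>j<M. D i j) = (\<Sum>j\<in>{..<M} - {i}. D i j)" if "i < M" for i
    using that by (simp add: sum_diff1 D_def)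
  then have S: "(\<Sum>i<M. \<Sum>j<M. D i j) = S" unfolding S_def by simp
  have "I_E V \<Phi> = (\<Sum>i<M. (1 / real M) * kl_div (out_dist V (cQ \<Phi> i)) (eve_mix V \<Phi>))"
    unfolding I_E_def M_def ..
  also have "\<dots> \<le> (\<Sum>i<M. (1 / real M) * (B * ((1 / real M) * (\<Sum>j<M. D i j))))"
    unfolding B_def D_def M_def by (intro sum_mono mult_left_mono kl_div_eve_mix_le) auto
  also have "\<dots> = B * (1 / (real M * real M)) * S"
    by (simp add: S[symmetric] sum_distrib_left mult.assoc mult.left_commute)
  also have "\<dots> \<le> B * d_E V \<Phi>"
  proof (cases "M = 1")
    case True
    then have "S = 0" by (simp add: S_def lessThan_Suc)
    then show ?thesis using B d_E_nonneg[of V \<Phi>] by simp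
  next
    case False
    then have "1 / (real M * real M) \<le> 1 / (real M * (real M - 1))"
      using M by (intro divide_left_mono mult_left_mono) auto
    moreover have "0 \<le> S" unfolding S_def D_def by (intro sum_nonneg infsum_nonneg) auto
    ultimately have "B * (1 / (real M * real M) * S) \<le> B * (1 / (real M * (real M - 1)) * S)"
      using B by (intro mult_left_mono mult_right_mono) auto
    moreover have "d_E V \<Phi> = 1 / (real M * (real M - 1)) * S"
      unfolding d_E_def S_def D_def M_def ..
    ultimately show ?thesis by (simp only: mult.assoc)
  qed
  finally show ?thesis by (simp add: B_def M_def)
qed

section \<open>Achievable rates\<close>

lemma nat_ceiling_bounds:
  fixes x :: real
  assumes "1 \<le> x"
  shows "1 \<le> nat \<lceil>x\<rceil>" "x \<le> real (nat \<lceil>x\<rceil>)" "real (nat \<lceil>x\<rceil>) \<le> 2 * x"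
proof -
  show "x \<le> real (nat \<lceil>x\<rceil>)" by (rule real_nat_ceiling_ge)
  then show "1 \<le> nat \<lceil>x\<rceil>" using assms by linarith
  have "real (nat \<lceil>x\<rceil>) = of_int \<lceil>x\<rceil>" using assms by simp
  also have "\<dots> \<le> x + 1" by (rule of_int_ceiling_le_add_one)
  finally show "real (nat \<lceil>x\<rceil>) \<le> 2 * x" using assms by linarith
qed

lemma codebook_size_times_exp_le:
  assumes "0 \<le> R" "0 \<le> b + g" "R + b + 2 * g \<le> a"
  shows "real (nat \<lceil>exp (real n * R)\<rceil>) * real (nat \<lceil>exp (real n * (b + g))\<rceil>) * exp (- real n * a)
         \<le> 4 * exp (- (real n * g))"
proof -
  have exp_ge_1: "1 \<le> exp (real n * R)" "1 \<le> exp (real n * (b + g))" using assms(1,2) by simp_all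
  have "real (nat \<lceil>exp (real n * R)\<rceil>) * real (nat \<lceil>exp (real n * (b + g))\<rceil>) * exp (- real n * a) \<le>
        (2 * exp (real n * R)) * (2 * exp (real n * (b + g))) * exp (- real n * a)"
    using nat_ceiling_bounds(3)[OF exp_ge_1(1)] nat_ceiling_bounds(3)[OF exp_ge_1(2)]
    by (intro mult_right_mono mult_mono of_nat_0_le_iff) auto
  also have "\<dots> = 4 * exp (real n * (R + b + g - a))"
    by (simp add: exp_add[symmetric] algebra_simps)
  also have "\<dots> \<le> 4 * exp (- (real n * g))"
  proof -
    have "real n * (R + b + g - a) \<le> real n * (- g)" using assms(3) by (intro mult_left_mono) auto
    then show ?thesis by simp
  qed
  finally show ?thesis .
qed

lemma bin_size_resolvability_term_le:
  fixes n :: nat and b g :: real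
  assumes "0 \<le> b + g"
  defines "r \<equiv> exp (- (real n * g / 2))"
  shows "exp (real n * b) / (2 * r * real (nat \<lceil>exp (real n * (b + g))\<rceil>)) \<le> r / 2"
proof -
  let ?L = "real (nat \<lceil>exp (real n * (b + g))\<rceil>)"
  have exp_ge_1: "1 \<le> exp (real n * (b + g))" using assms(1) by simp
  have "exp (real n * (b + g / 2)) = r * exp (real n * (b + g))"
    by (simp add: r_def exp_add[symmetric] algebra_simps)
  also have "\<dots> \<le> r * ?L" using nat_ceiling_bounds(2)[OF exp_ge_1] by (simp add: r_def)
  finally have "exp (real n * b) / (2 * r * ?L) \<le> exp (real n * b) / (2 * exp (real n * (b + g / 2)))"
    using nat_ceiling_bounds(1)[OF exp_ge_1] by (intro divide_left_mono) (auto simp: r_def mult.assoc)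
  also have "\<dots> = r / 2"
    by (simp add: r_def exp_diff[symmetric] exp_minus[symmetric] field_simps)
  finally show ?thesis .
qed

lemma exists_wiretap_code_at_rate:
  fixes WB :: "nat \<Rightarrow> 'x \<Rightarrow> 'y pmf" and WE :: "nat \<Rightarrow> 'x \<Rightarrow> 'z pmf" and p :: "nat \<Rightarrow> 'x pmf"
  assumes "0 < n" "0 < R" "0 < g" "0 \<le> b" "R + b + 2 * g \<le> a"
  defines "M \<equiv> nat \<lceil>exp (real n * R)\<rceil>" and "L \<equiv> nat \<lceil>exp (real n * (b + g))\<rceil>"
    and "G \<equiv> \<lambda>x y. a < info_density (WB n) (p n) n x y"
  shows "\<exists>h. eps_B (WB n) (wiretap_code M L G h) + d_E (WE n) (wiretap_code M L G h)
           \<le> (1 - spec_F WB p n a) + 4 * exp (- (real n * g)) + 3 * exp (- (real n * g / 2))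
              + 4 * spec_F WE p n b"
proof -
  define r where "r = exp (- (real n * g / 2))"
  define A where "A = exp (real n * b) / (2 * r * real L)"
  have "1 \<le> M" "1 \<le> L" "0 \<le> a" "0 < r"
    using assms(2-5) nat_ceiling_bounds(1) by (simp_all add: M_def L_def r_def)
  then obtain h where h: "eps_B (WB n) (wiretap_code M L G h) + d_E (WE n) (wiretap_code M L G h)
      \<le> measure_pmf.expectation (p n)
            (\<lambda>x. measure_pmf.prob (WB n x) {y. info_density (WB n) (p n) n x y \<le> a})
        + real M * real L * exp (- real n * a)
        + 2 * (A + r / 2
               + 2 * (1 - measure_pmf.expectation (p n)
                        (\<lambda>x. measure_pmf.prob (WE n x) {z. info_density (WE n) (p n) n x z \<le> b})))
        + r"
    using exists_wiretap_code[OF assms(1), where W="WB n" and q="p n" and V="WE n" and b=b]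
    unfolding G_def A_def by blast
  moreover have "measure_pmf.expectation (p n)
      (\<lambda>x. measure_pmf.prob (WB n x) {y. info_density (WB n) (p n) n x y \<le> a}) = 1 - spec_F WB p n a"
    "measure_pmf.expectation (p n)
      (\<lambda>x. measure_pmf.prob (WE n x) {z. info_density (WE n) (p n) n x z \<le> b}) = 1 - spec_F WE p n b"
    by (simp_all add: one_minus_spec_F)
  ultimately have "eps_B (WB n) (wiretap_code M L G h) + d_E (WE n) (wiretap_code M L G h)
        \<le> (1 - spec_F WB p n a) + real M * real L * exp (- real n * a) + 2 * A + 2 * r + 4 * spec_F WE p n b"
    by (simp add: algebra_simps)
  moreover have "real M * real L * exp (- real n * a) \<le> 4 * exp (- (real n * g))"
    unfolding M_def L_def using assms(2-5) by (intro codebook_size_times_exp_le) auto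
  moreover have "A \<le> r / 2"
    unfolding A_def r_def L_def using assms(3,4) by (intro bin_size_resolvability_term_le) auto
  ultimately show ?thesis unfolding r_def by (intro exI[of _ h]) linarith
qed

lemma I_E_div_le_d_E:
  assumes "1 \<le> cM \<Phi>" "real (cM \<Phi>) \<le> 2 * exp (real n * R)" "0 < n" "0 \<le> R"
  shows "I_E V \<Phi> / real n \<le> (2 + R) * d_E V \<Phi>"
proof -
  have "ln (real (cM \<Phi>)) \<le> ln (2 * exp (real n * R))"
    using assms(1,2) by (subst ln_le_cancel_iff) auto
  also have "\<dots> = ln 2 + real n * R" by (simp add: ln_mult)
  also have "\<dots> \<le> real n * (2 + R)" using ln_2_less_1 assms(3,4) by (simp add: algebra_simps)
  finally have "ln (real (cM \<Phi>)) \<le> real n * (2 + R)" .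
  moreover have "1 \<le> real n * (2 + R)"
  proof -
    have "1 \<le> real n * 1" using assms(3) by simp
    also have "\<dots> \<le> real n * (2 + R)" using assms(4) by (intro mult_left_mono) auto
    finally show ?thesis .
  qed
  ultimately have "max 1 (ln (real (cM \<Phi>))) \<le> real n * (2 + R)" by simp
  then have "I_E V \<Phi> \<le> real n * (2 + R) * d_E V \<Phi>"
    using I_E_le_d_E[OF assms(1)] d_E_nonneg[of V \<Phi>] by (meson mult_right_mono order_trans)
  then show ?thesis using assms(3) by (simp add: field_simps)
qed

lemma tendsto_I_E_div_zero:
  assumes "\<And>n. 1 \<le> cM (\<Phi> n)" "\<And>n. real (cM (\<Phi> n)) \<le> 2 * exp (real n * R)" "0 \<le> R"
    and "(\<lambda>n. d_E (V n) (\<Phi> n)) \<longlonglongrightarrow> 0"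
  shows "(\<lambda>n. I_E (V n) (\<Phi> n) / real n) \<longlonglongrightarrow> 0"
proof (rule tendsto_sandwich[where h="\<lambda>n. (2 + R) * d_E (V n) (\<Phi> n)"])
  show "\<forall>\<^sub>F n in sequentially. 0 \<le> I_E (V n) (\<Phi> n) / real n"
    using assms(1) by (intro always_eventually allI divide_nonneg_nonneg I_E_nonneg) simp_all
  show "\<forall>\<^sub>F n in sequentially. I_E (V n) (\<Phi> n) / real n \<le> (2 + R) * d_E (V n) (\<Phi> n)"
    using eventually_gt_at_top[of 0] by eventually_elim (intro I_E_div_le_d_E assms)
  show "(\<lambda>n. (2 + R) * d_E (V n) (\<Phi> n)) \<longlonglongrightarrow> 0"
    using tendsto_mult_right_zero[OF assms(4)] by simp
qed simp

lemma liminf_rate_ge: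
  assumes "\<And>n. exp (real n * R) \<le> real (cM (\<Phi> n))"
  shows "ereal R \<le> liminf (\<lambda>n. ereal (ln (real (cM (\<Phi> n))) / real n))"
proof (intro Liminf_bounded eventually_mono[OF eventually_gt_at_top[of 0]])
  fix n :: nat assume "0 < n"
  have "real n * R = ln (exp (real n * R))" by simp
  also have "\<dots> \<le> ln (real (cM (\<Phi> n)))"
    using assms[of n] less_le_trans[OF exp_gt_zero assms[of n]] by (subst ln_le_cancel_iff) auto
  finally show "ereal R \<le> ereal (ln (real (cM (\<Phi> n))) / real n)"
    using \<open>0 < n\<close> by (simp add: field_simps)
qed

lemma exists_secure_code_sequence:
  fixes WB :: "nat \<Rightarrow> 'x \<Rightarrow> 'y pmf" and WE :: "nat \<Rightarrow> 'x \<Rightarrow> 'z pmf" and p :: "nat \<Rightarrow> 'x pmf"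
  assumes R: "0 < R" and g: "0 < g" and b: "0 \<le> b" and rates: "R + b + 2 * g \<le> a"
    and FB: "(\<lambda>n. spec_F WB p n a) \<longlonglongrightarrow> 1" and FE: "(\<lambda>n. spec_F WE p n b) \<longlonglongrightarrow> 0"
  shows "\<exists>\<Phi> :: nat \<Rightarrow> ('x, 'y) wtcode. (\<forall>n. valid_code (\<Phi> n)) \<and>
           (\<lambda>n. eps_B (WB n) (\<Phi> n)) \<longlonglongrightarrow> 0 \<and>
           (\<lambda>n. d_E (WE n) (\<Phi> n)) \<longlonglongrightarrow> 0 \<and>
           (\<lambda>n. I_E (WE n) (\<Phi> n) / real n) \<longlonglongrightarrow> 0 \<and>
           ereal R \<le> liminf (\<lambda>n. ereal (ln (real (cM (\<Phi> n))) / real n))"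
proof -
  define M where "M n = nat \<lceil>exp (real n * R)\<rceil>" for n
  define L where "L n = nat \<lceil>exp (real n * (b + g))\<rceil>" for n
  define G where "G n = (\<lambda>x y. a < info_density (WB n) (p n) n x y)" for n
  define \<beta> where "\<beta> n = (1 - spec_F WB p n a) + 4 * exp (- (real n * g))
                          + 3 * exp (- (real n * g / 2)) + 4 * spec_F WE p n b" for n
  have exp_ge_1: "1 \<le> exp (real n * R)" for n using R by simp
  note M_bounds = nat_ceiling_bounds[OF exp_ge_1, folded M_def]
  have "\<forall>n. \<exists>h. 0 < n \<longrightarrow>
          eps_B (WB n) (wiretap_code (M n) (L n) (G n) h) + d_E (WE n) (wiretap_code (M n) (L n) (G n) h) \<le> \<beta> n"
    using exists_wiretap_code_at_rate[OF _ R g b rates, of _ WB p WE]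
    unfolding M_def L_def G_def \<beta>_def by blast
  then obtain H where H: "\<And>n. 0 < n \<Longrightarrow>
      eps_B (WB n) (wiretap_code (M n) (L n) (G n) (H n)) + d_E (WE n) (wiretap_code (M n) (L n) (G n) (H n)) \<le> \<beta> n"
    by metis
  define \<Phi> where "\<Phi> n = wiretap_code (M n) (L n) (G n) (H n)" for n
  have cM: "cM (\<Phi> n) = M n" for n by (simp add: \<Phi>_def)
  have "\<beta> \<longlonglongrightarrow> (1 - 1) + 4 * 0 + 3 * 0 + 4 * 0"
    unfolding \<beta>_def using g by (intro tendsto_intros FB FE; real_asymp)
  then have \<beta>: "\<beta> \<longlonglongrightarrow> 0" by simp
  have eps_le: "eps_B (WB n) (\<Phi> n) \<le> \<beta> n" and d_E_le: "d_E (WE n) (\<Phi> n) \<le> \<beta> n" if "0 < n" for n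
    using H[OF that] eps_B_nonneg[of "WB n" "\<Phi> n"] d_E_nonneg[of "WE n" "\<Phi> n"] unfolding \<Phi>_def by linarith+
  have eps: "(\<lambda>n. eps_B (WB n) (\<Phi> n)) \<longlonglongrightarrow> 0"
    by (rule tendsto_sandwich[OF _ eventually_mono[OF eventually_gt_at_top[of 0] eps_le] tendsto_const \<beta>])
       (simp add: eps_B_nonneg)
  have d_E: "(\<lambda>n. d_E (WE n) (\<Phi> n)) \<longlonglongrightarrow> 0"
    by (rule tendsto_sandwich[OF _ eventually_mono[OF eventually_gt_at_top[of 0] d_E_le] tendsto_const \<beta>])
       (simp add: d_E_nonneg)
  have "(\<lambda>n. I_E (WE n) (\<Phi> n) / real n) \<longlonglongrightarrow> 0"
    using M_bounds(1,3) less_imp_le[OF R] by (intro tendsto_I_E_div_zero[OF _ _ _ d_E]) (simp_all add: cM)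
  moreover have "ereal R \<le> liminf (\<lambda>n. ereal (ln (real (cM (\<Phi> n))) / real n))"
    using M_bounds(2) by (intro liminf_rate_ge) (simp add: cM)
  moreover have "\<forall>n. valid_code (\<Phi> n)"
    using M_bounds(1) by (simp add: \<Phi>_def valid_wiretap_code)
  ultimately show ?thesis using eps d_E by blast
qed

lemma rate_le_C_d_and_C_I:
  fixes WB :: "nat \<Rightarrow> 'x \<Rightarrow> 'y pmf" and WE :: "nat \<Rightarrow> 'x \<Rightarrow> 'z pmf"
  assumes "\<forall>n. valid_code (\<Phi> n)" "(\<lambda>n. eps_B (WB n) (\<Phi> n)) \<longlonglongrightarrow> 0"
    "(\<lambda>n. d_E (WE n) (\<Phi> n)) \<longlonglongrightarrow> 0" "(\<lambda>n. I_E (WE n) (\<Phi> n) / real n) \<longlonglongrightarrow> 0"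
    "v \<le> liminf (\<lambda>n. ereal (ln (real (cM (\<Phi> n))) / real n))"
  shows "v \<le> C_d WB WE" "v \<le> C_I WB WE"
  unfolding C_d_def C_I_def by (rule Sup_upper2[OF _ assms(5)], use assms in blast)+

lemma C_d_C_I_nonneg:
  fixes WB :: "nat \<Rightarrow> 'x \<Rightarrow> 'y pmf" and WE :: "nat \<Rightarrow> 'x \<Rightarrow> 'z pmf"
  shows "0 \<le> C_d WB WE" "0 \<le> C_I WB WE"
proof -
  define \<Phi> :: "nat \<Rightarrow> ('x, 'y) wtcode"
    where "\<Phi> n = \<lparr>cM = 1, cQ = (\<lambda>_. return_pmf undefined), cD = (\<lambda>_. UNIV)\<rparr>" for n
  have cM: "cM (\<Phi> n) = 1" for n by (simp add: \<Phi>_def)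
  have d_E: "d_E (WE n) (\<Phi> n) = 0" for n by (simp add: \<Phi>_def d_E_def)
  have I_E: "I_E (WE n) (\<Phi> n) = 0" for n
    using I_E_le_d_E[of "\<Phi> n" "WE n"] I_E_nonneg[of "\<Phi> n" "WE n"] by (simp add: cM d_E)
  have "\<forall>n. valid_code (\<Phi> n)" "(\<lambda>n. eps_B (WB n) (\<Phi> n)) \<longlonglongrightarrow> 0"
       "0 \<le> liminf (\<lambda>n. ereal (ln (real (cM (\<Phi> n))) / real n))"
    by (simp_all add: \<Phi>_def valid_code_def eps_B_def zero_ereal_def[symmetric] Liminf_const)
  then show "0 \<le> C_d WB WE" "0 \<le> C_I WB WE"
    using rate_le_C_d_and_C_I[of \<Phi> WB WE 0] by (simp_all add: d_E I_E)
qed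

lemma ereal_le_by_positive_reals:
  fixes X C :: ereal
  assumes "0 \<le> C" "\<And>R. 0 < R \<Longrightarrow> ereal R < X \<Longrightarrow> ereal R \<le> C"
  shows "X \<le> C"
proof (rule dense_le)
  fix w assume w: "w < X"
  show "w \<le> C"
  proof (cases w)
    case (real R)
    then show ?thesis
      using assms w by (cases "0 < R") (auto intro: order_trans[of _ 0] simp: zero_ereal_def)
  qed (use w in auto)
qed

text \<open>The first hypothesis rules out the junk value \<open>\<infinity> - \<infinity> = \<infinity>\<close> of \<open>ereal\<close> subtraction.\<close>
lemma rate_below_info_gap_le_capacities:
  fixes WB :: "nat \<Rightarrow> 'x \<Rightarrow> 'y pmf" and WE :: "nat \<Rightarrow> 'x \<Rightarrow> 'z pmf" and p :: "nat \<Rightarrow> 'x pmf"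
  assumes "\<not> (I_inf 1 p WB = \<infinity> \<and> I_sup 0 p WE = \<infinity>)"
    and R: "0 < R" "ereal R < I_inf 1 p WB - I_sup 0 p WE"
  shows "ereal R \<le> C_d WB WE \<and> ereal R \<le> C_I WB WE"
proof -
  obtain y where y: "I_sup 0 p WE = ereal y" "0 \<le> y"
    using assms I_sup_0_nonneg[of p WE] by (cases "I_sup 0 p WE"; cases "I_inf 1 p WB") auto
  have X: "ereal (R + y) < I_inf 1 p WB" using R(2) y(1) by (cases "I_inf 1 p WB") auto
  obtain a b g where abg: "0 < g" "0 \<le> b" "y < b" "ereal a < I_inf 1 p WB" "R + b + 2 * g \<le> a"
  proof (cases "I_inf 1 p WB")
    case (real x)
    define \<delta> where "\<delta> = (x - y - R) / 4"
    have "0 < \<delta>" using X real by (simp add: \<delta>_def)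
    then show ?thesis
      by (intro that[of "\<delta> / 2" "y + \<delta>" "x - \<delta>"]) (use X y real in \<open>auto simp: \<delta>_def field_simps\<close>)
  qed (use X y in \<open>auto intro: that[of 1 "y + 1" "R + y + 3"]\<close>)
  then obtain \<Phi> :: "nat \<Rightarrow> ('x, 'y) wtcode" where "\<forall>n. valid_code (\<Phi> n)"
      "(\<lambda>n. eps_B (WB n) (\<Phi> n)) \<longlonglongrightarrow> 0" "(\<lambda>n. d_E (WE n) (\<Phi> n)) \<longlonglongrightarrow> 0"
      "(\<lambda>n. I_E (WE n) (\<Phi> n) / real n) \<longlonglongrightarrow> 0"
      "ereal R \<le> liminf (\<lambda>n. ereal (ln (real (cM (\<Phi> n))) / real n))"
  proof -
    have "I_sup 0 p WE < ereal b" using y(1) abg(3) by simp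
    then show ?thesis
      using that exists_secure_code_sequence[OF R(1) abg(1,2,5) spec_F_tendsto_1[OF abg(4)] spec_F_tendsto_0]
      by blast
  qed
  then show ?thesis using rate_le_C_d_and_C_I by blast
qed

text \<open>The second definedness hypothesis is vacuous as well, since \<open>I_sup 0 p WE \<ge> 0\<close>.\<close>
theorem lemma5:
  fixes WB :: "nat \<Rightarrow> 'x \<Rightarrow> 'y pmf" and WE :: "nat \<Rightarrow> 'x \<Rightarrow> 'z pmf"
    and p :: "nat \<Rightarrow> 'x pmf"
  assumes defined: "\<not> (I_inf 1 p WB = \<infinity> \<and> I_sup 0 p WE = \<infinity>)"
                   "\<not> (I_inf 1 p WB = -\<infinity> \<and> I_sup 0 p WE = -\<infinity>)"
  shows "I_inf 1 p WB - I_sup 0 p WE \<le> C_d WB WE \<and>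
         (\<forall>(d::nat) (Zs :: nat \<Rightarrow> 'z set).
           d > 0 \<and>
           (\<forall>n\<ge>1. finite (Zs n) \<and> card (Zs n) = d ^ n \<and>
                    (\<forall>x. set_pmf (WE n x) \<subseteq> Zs n)) \<longrightarrow>
           I_inf 1 p WB - I_sup 0 p WE \<le> C_I WB WE)"
proof -
  have "I_inf 1 p WB - I_sup 0 p WE \<le> C_d WB WE"
    using C_d_C_I_nonneg(1) rate_below_info_gap_le_capacities[OF defined(1)]
    by (blast intro: ereal_le_by_positive_reals)
  moreover have "I_inf 1 p WB - I_sup 0 p WE \<le> C_I WB WE"
    using C_d_C_I_nonneg(2) rate_below_info_gap_le_capacities[OF defined(1)]
    by (blast intro: ereal_le_by_positive_reals)
  ultimately show ?thesis by blast
qed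

end
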